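(* Let $(u_0,v_0)\in\mathrm{L}^2(\mathbb{R})$ and, for each $\tau>0$, let $(u^{(\tau)},v^{(\tau)})$ be a time-splitting solution with mesh $\tau$ whose piecewise constant initial data satisfy $\|u^{(\tau)}(\cdot,0)-u_0\|_{\mathrm{L}^2}+\|v^{(\tau)}(\cdot,0)-v_0\|_{\mathrm{L}^2}\to0$ as $\tau\to0+$. Let $T>0$. There exist $\tau_*\in(0,1)$ and a constant $C_1(T)>0$ such that for every $\varepsilon>0$ there is $\delta_1>0$ with the following property: for all $\tau\in(0,\min\{\delta_1,\tau_*\})$, all $h\in(0,\delta_1)$ and all $t_0\ge0$ with $t_0+h\le T$, $$\int_{\mathbb{R}}|u^{(\tau)}(x+h,t_0+h)-u^{(\tau)}(x,t_0)|^2\,dx<C_1(T)(\varepsilon+\tau),\qquad \int_{\mathbb{R}}|v^{(\tau)}(x-h,t_0+h)-v^{(\tau)}(x,t_0)|^2\,dx<C_1(T)(\varepsilon+\tau).$$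
   Context: Fix constants $m\ge 0$ and $\alpha,\beta\in\mathbb{R}$. Let (N) denote the ODE system on $\mathbb{C}^2$: $\frac{du}{ds}=imv+i\alpha u|v|^2+2i\beta(\bar u v+u\bar v)v$, $\frac{dv}{ds}=imu+i\alpha v|u|^2+2i\beta(\bar u v+u\bar v)u$. Time-splitting scheme with mesh $\tau>0$: given $(u_j^0,v_j^0)_{j\in\mathbb{Z}}\subset\mathbb{C}^2$ with $\sum_j(|u_j^0|^2+|v_j^0|^2)<\infty$, set $(u^{(\tau)},v^{(\tau)})(x,0)=(u_j^0,v_j^0)$ for $x\in[j\tau,(j+1)\tau)$. Inductively, once $(u^{(\tau)},v^{(\tau)})(\cdot,n\tau)$ is defined, set for $t\in[n\tau,(n+1)\tau)$: $u^{(\tau)}(x,t)=u^{(\tau)}(x-(t-n\tau),n\tau)$, $v^{(\tau)}(x,t)=v^{(\tau)}(x+(t-n\tau),n\tau)$; let $(u^{(\tau)},v^{(\tau)})(x,(n+1)\tau-)$ be the left limit in $t$; and for each $x$ define $(u^{(\tau)},v^{(\tau)})(x,(n+1)\tau)$ as the value at $s=\tau$ of the solution of (N) with value $(u^{(\tau)},v^{(\tau)})(x,(n+1)\tau-)$ at $s=0$ (this is globally well defined). *)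

theory Defs
  imports "HOL-Analysis.Analysis"
begin

definition N_field :: "real \<Rightarrow> real \<Rightarrow> real \<Rightarrow> complex \<times> complex \<Rightarrow> complex \<times> complex" where
  "N_field m \<alpha> \<beta> p =
     (let u = fst p; v = snd p; q = cnj u * v + u * cnj v in
      (\<i> * of_real m * v + \<i> * of_real \<alpha> * u * of_real ((cmod v)^2) + 2 * \<i> * of_real \<beta> * q * v,
       \<i> * of_real m * u + \<i> * of_real \<alpha> * v * of_real ((cmod u)^2) + 2 * \<i> * of_real \<beta> * q * u))"

definition N_flow :: "real \<Rightarrow> real \<Rightarrow> real \<Rightarrow> real \<Rightarrow> complex \<times> complex \<Rightarrow> complex \<times> complex" where
  "N_flow m \<alpha> \<beta> s p =
     (THE q. \<exists>w. w 0 = p \<and> w s = q \<and>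
        (\<forall>r\<in>{0..s}. (w has_vector_derivative N_field m \<alpha> \<beta> (w r)) (at r within {0..s})))"

text \<open>Values of the time-splitting solution at the grid times n*tau (after the nonlinear step).
  The left limit at (n+1)tau- of the transported piecewise-constant (right-continuous) data
  is (u(x - tau, n tau), v(x + tau, n tau)).\<close>
fun ts_grid :: "real \<Rightarrow> real \<Rightarrow> real \<Rightarrow> real \<Rightarrow> (int \<Rightarrow> complex \<times> complex) \<Rightarrow> nat \<Rightarrow> real \<Rightarrow> complex \<times> complex" where
  "ts_grid m \<alpha> \<beta> \<tau> d 0 x = d \<lfloor>x / \<tau>\<rfloor>"
| "ts_grid m \<alpha> \<beta> \<tau> d (Suc n) x =
     N_flow m \<alpha> \<beta> \<tau> (fst (ts_grid m \<alpha> \<beta> \<tau> d n (x - \<tau>)), snd (ts_grid m \<alpha> \<beta> \<tau> d n (x + \<tau>)))"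

definition ts_u :: "real \<Rightarrow> real \<Rightarrow> real \<Rightarrow> real \<Rightarrow> (int \<Rightarrow> complex \<times> complex) \<Rightarrow> real \<Rightarrow> real \<Rightarrow> complex" where
  "ts_u m \<alpha> \<beta> \<tau> d x t =
     (let n = nat \<lfloor>t / \<tau>\<rfloor> in fst (ts_grid m \<alpha> \<beta> \<tau> d n (x - (t - real n * \<tau>))))"

definition ts_v :: "real \<Rightarrow> real \<Rightarrow> real \<Rightarrow> real \<Rightarrow> (int \<Rightarrow> complex \<times> complex) \<Rightarrow> real \<Rightarrow> real \<Rightarrow> complex" where
  "ts_v m \<alpha> \<beta> \<tau> d x t =
     (let n = nat \<lfloor>t / \<tau>\<rfloor> in snd (ts_grid m \<alpha> \<beta> \<tau> d n (x + (t - real n * \<tau>))))"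

end

(*
  The scheme acts on lattice data: the two components are shifted by one cell in opposite
  directions, and then the flow of (N), which preserves |u|^2 + |v|^2, acts in every cell. Hence
  the mass of a window of cells never exceeds the initial mass of its domain of dependence, and
  one step changes u by O(tau |u| |v|^2 + tau |u| + tau |v|). Along a characteristic of u a discrete
  Gronwall argument bounds the change over k steps in terms of the v-mass crossed, which is the
  initial mass of 2k cells, and of k tau; a second induction in time shows that windows that are
  initially small stay small up to a factor depending on T. As the initial step functions
  converge in L^2, windows of length O(h + tau) carry uniformly small mass, and summing over the
  cells gives the estimate for u; the one for v follows by reflecting the lattice.
*)
theory Submission
  imports Defs
begin

section \<open>The vector field of (N)\<close>

definition N_comp :: "real \<Rightarrow> real \<Rightarrow> real \<Rightarrow> complex \<Rightarrow> complex \<Rightarrow> complex" where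
  "N_comp m \<alpha> \<beta> u v =
     \<i> * of_real m * v + \<i> * of_real \<alpha> * u * of_real ((cmod v)^2) + 2 * \<i> * of_real \<beta> * (cnj u * v + u * cnj v) * v"

lemma N_field_eq_N_comp:
  "N_field m \<alpha> \<beta> p = (N_comp m \<alpha> \<beta> (fst p) (snd p), N_comp m \<alpha> \<beta> (snd p) (fst p))"
  unfolding N_field_def N_comp_def Let_def by (simp add: algebra_simps)

lemma N_field_swap:
  "N_field m \<alpha> \<beta> (snd p, fst p) = (snd (N_field m \<alpha> \<beta> p), fst (N_field m \<alpha> \<beta> p))"
  by (simp add: N_field_eq_N_comp)

lemma inner_N_field_self: "p \<bullet> N_field m \<alpha> \<beta> p = 0"
proof (cases p)
  case (Pair u v)
  show ?thesis unfolding Pair N_field_def Let_def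
    by (simp add: inner_complex_def inner_prod_def cmod_power2 algebra_simps)
qed

lemma norm_fst_snd_le: "norm (fst z) \<le> norm z" "norm (snd z) \<le> norm z"
  using norm_fst_le[of "fst z" "snd z"] norm_snd_le[of "snd z" "fst z"] by simp_all

lemma power2_norm_prod: "(norm z)^2 = (norm (fst z))^2 + (norm (snd z))^2"
  by (cases z) (simp add: norm_Pair)

lemma norm_triple_product_diff_le:
  fixes x1 y1 w1 x2 y2 w2 :: "'a::real_normed_field"
  assumes "norm x1 \<le> R" "norm y1 \<le> R" "norm w1 \<le> R" "norm x2 \<le> R" "norm y2 \<le> R"
    and "norm (x1 - x2) \<le> D" "norm (y1 - y2) \<le> D" "norm (w1 - w2) \<le> D"
  shows "norm (x1 * y1 * w1 - x2 * y2 * w2) \<le> 3 * R^2 * D"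
proof -
  have R: "0 \<le> R" using assms(1) norm_ge_zero order_trans by blast
  have "x1 * y1 * w1 - x2 * y2 * w2 = (x1 - x2) * (y1 * w1) + (y1 - y2) * (x2 * w1) + (w1 - w2) * (x2 * y2)"
    by (simp add: algebra_simps)
  also have "norm \<dots> \<le> D * R^2 + D * R^2 + D * R^2"
    unfolding power2_eq_square using assms R
    by (intro norm_triangle_le add_mono order_trans[OF norm_triangle_ineq])
       (simp_all add: norm_mult mult_mono')
  finally show ?thesis by (simp add: algebra_simps)
qed

lemma N_comp_lipschitz:
  assumes m: "m \<ge> 0" and R: "cmod u1 \<le> R" "cmod v1 \<le> R" "cmod u2 \<le> R" "cmod v2 \<le> R"
    and D: "cmod (u1 - u2) \<le> D" "cmod (v1 - v2) \<le> D"
  shows "cmod (N_comp m \<alpha> \<beta> u1 v1 - N_comp m \<alpha> \<beta> u2 v2) \<le> (m + (3 * \<bar>\<alpha>\<bar> + 12 * \<bar>\<beta>\<bar>) * R^2) * D"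
proof -
  have sq: "\<And>v. (of_real ((cmod v)^2) :: complex) = v * cnj v"
    by (metis complex_norm_square of_real_power)
  have cnj: "cmod (cnj a) \<le> R" "cmod (cnj a - cnj b) \<le> D" if "cmod a \<le> R" "cmod (a - b) \<le> D" for a b
    using that by (simp_all flip: complex_cnj_diff)
  have t\<alpha>: "cmod (u1 * v1 * cnj v1 - u2 * v2 * cnj v2) \<le> 3 * R^2 * D"
    by (rule norm_triple_product_diff_le) (use R D cnj in auto)
  have t\<beta>1: "cmod (cnj u1 * v1 * v1 - cnj u2 * v2 * v2) \<le> 3 * R^2 * D"
    by (rule norm_triple_product_diff_le) (use R D cnj in auto)
  have t\<beta>2: "cmod (u1 * cnj v1 * v1 - u2 * cnj v2 * v2) \<le> 3 * R^2 * D"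
    by (rule norm_triple_product_diff_le) (use R D cnj in auto)
  have "N_comp m \<alpha> \<beta> u1 v1 - N_comp m \<alpha> \<beta> u2 v2
     = \<i> * of_real m * (v1 - v2) + \<i> * of_real \<alpha> * (u1 * v1 * cnj v1 - u2 * v2 * cnj v2)
       + 2 * \<i> * of_real \<beta> * (cnj u1 * v1 * v1 - cnj u2 * v2 * v2)
       + 2 * \<i> * of_real \<beta> * (u1 * cnj v1 * v1 - u2 * cnj v2 * v2)"
    unfolding N_comp_def sq by (simp add: algebra_simps)
  also have "cmod \<dots> \<le> m * D + \<bar>\<alpha>\<bar> * (3 * R^2 * D) + 2 * \<bar>\<beta>\<bar> * (3 * R^2 * D) + 2 * \<bar>\<beta>\<bar> * (3 * R^2 * D)"
  proof (intro norm_triangle_mono)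
    show "cmod (\<i> * of_real m * (v1 - v2)) \<le> m * D"
      using m D by (simp add: norm_mult mult_left_mono)
    show "cmod (\<i> * of_real \<alpha> * (u1 * v1 * cnj v1 - u2 * v2 * cnj v2)) \<le> \<bar>\<alpha>\<bar> * (3 * R^2 * D)"
      using t\<alpha> by (simp add: norm_mult mult_left_mono)
    have "cmod (2 * \<i> * of_real \<beta> * (cnj u1 * v1 * v1 - cnj u2 * v2 * v2)) = 2 * \<bar>\<beta>\<bar> * cmod (cnj u1 * v1 * v1 - cnj u2 * v2 * v2)"
      by (simp add: norm_mult)
    also have "\<dots> \<le> 2 * \<bar>\<beta>\<bar> * (3 * R^2 * D)"
      by (rule mult_left_mono[OF t\<beta>1]) simp
    finally show "cmod (2 * \<i> * of_real \<beta> * (cnj u1 * v1 * v1 - cnj u2 * v2 * v2)) \<le> 2 * \<bar>\<beta>\<bar> * (3 * R^2 * D)" .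
    have "cmod (2 * \<i> * of_real \<beta> * (u1 * cnj v1 * v1 - u2 * cnj v2 * v2)) = 2 * \<bar>\<beta>\<bar> * cmod (u1 * cnj v1 * v1 - u2 * cnj v2 * v2)"
      by (simp add: norm_mult)
    also have "\<dots> \<le> 2 * \<bar>\<beta>\<bar> * (3 * R^2 * D)"
      by (rule mult_left_mono[OF t\<beta>2]) simp
    finally show "cmod (2 * \<i> * of_real \<beta> * (u1 * cnj v1 * v1 - u2 * cnj v2 * v2)) \<le> 2 * \<bar>\<beta>\<bar> * (3 * R^2 * D)" .
  qed
  also have "\<dots> = (m + (3 * \<bar>\<alpha>\<bar> + 12 * \<bar>\<beta>\<bar>) * R^2) * D"
    by (simp add: algebra_simps)
  finally show ?thesis .
qed

definition N_lipschitz_const :: "real \<Rightarrow> real \<Rightarrow> real \<Rightarrow> real \<Rightarrow> real" where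
  "N_lipschitz_const m \<alpha> \<beta> R = 2 * (m + (3 * \<bar>\<alpha>\<bar> + 12 * \<bar>\<beta>\<bar>) * R^2)"

lemma N_lipschitz_const_nonneg: "m \<ge> 0 \<Longrightarrow> N_lipschitz_const m \<alpha> \<beta> R \<ge> 0"
  unfolding N_lipschitz_const_def by simp

lemma N_field_lipschitz:
  assumes m: "m \<ge> 0" and R: "norm z1 \<le> R" "norm z2 \<le> R"
  shows "norm (N_field m \<alpha> \<beta> z1 - N_field m \<alpha> \<beta> z2) \<le> N_lipschitz_const m \<alpha> \<beta> R * norm (z1 - z2)"
proof -
  have comp: "cmod (fst z1) \<le> R" "cmod (snd z1) \<le> R" "cmod (fst z2) \<le> R" "cmod (snd z2) \<le> R"
    using R norm_fst_snd_le[of z1] norm_fst_snd_le[of z2] by linarith+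
  have diff: "cmod (fst z1 - fst z2) \<le> norm (z1 - z2)" "cmod (snd z1 - snd z2) \<le> norm (z1 - z2)"
    using norm_fst_snd_le[of "z1 - z2"] by simp_all
  have "norm (N_field m \<alpha> \<beta> z1 - N_field m \<alpha> \<beta> z2)
      \<le> cmod (N_comp m \<alpha> \<beta> (fst z1) (snd z1) - N_comp m \<alpha> \<beta> (fst z2) (snd z2))
        + cmod (N_comp m \<alpha> \<beta> (snd z1) (fst z1) - N_comp m \<alpha> \<beta> (snd z2) (fst z2))"
    unfolding N_field_eq_N_comp using norm_Pair_le by (metis minus_prod_def fst_conv snd_conv)
  also have "\<dots> \<le> N_lipschitz_const m \<alpha> \<beta> R * norm (z1 - z2)"
    using N_comp_lipschitz[OF m comp diff, of \<alpha> \<beta>]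
      N_comp_lipschitz[OF m comp(2,1,4,3) diff(2,1), of \<alpha> \<beta>]
    unfolding N_lipschitz_const_def by linarith
  finally show ?thesis .
qed

lemma norm_N_field_le:
  assumes "m \<ge> 0" "norm z \<le> R"
  shows "norm (N_field m \<alpha> \<beta> z) \<le> N_lipschitz_const m \<alpha> \<beta> R * R"
proof -
  have "R \<ge> 0" using assms(2) norm_ge_zero order_trans by blast
  moreover have "N_field m \<alpha> \<beta> 0 = 0"
    unfolding N_field_def Let_def by (simp add: zero_prod_def)
  ultimately show ?thesis
    using N_field_lipschitz[OF assms(1,2), of 0 \<alpha> \<beta>] assms
      mult_left_mono[OF assms(2) N_lipschitz_const_nonneg[OF assms(1), of \<alpha> \<beta> R]] by simp
qed

section \<open>Solutions of (N) and the flow map\<close>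

lemma gronwall_affine:
  fixes f f' :: "real \<Rightarrow> real"
  assumes s: "0 \<le> s" and L: "0 < L"
    and der: "\<And>t. t \<in> {0..s} \<Longrightarrow> (f has_real_derivative f' t) (at t within {0..s})"
    and le: "\<And>t. t \<in> {0..s} \<Longrightarrow> f' t \<le> L * f t + c"
    and t: "t \<in> {0..s}"
  shows "f t + c / L \<le> (f 0 + c / L) * exp (L * t)"
proof -
  define g where "g x = (f x + c / L) * exp (- (L * x))" for x
  define g' where "g' x = f' x * exp (- (L * x)) + (f x + c / L) * (exp (- (L * x)) * (- L))" for x
  have dg: "(g has_real_derivative g' x) (at x within {0..t})" if "x \<in> {0..t}" for x
  proof -
    have "(f has_real_derivative f' x) (at x within {0..t})"
      using der[of x] that t by (auto intro: DERIV_subset)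
    then show ?thesis unfolding g_def g'_def
      by (auto intro!: derivative_eq_intros)
  qed
  have "\<exists>x\<in>{0..t}. g t - g 0 = (\<lambda>h. g' x * h) (t - 0)"
    by (rule mvt_very_simple) (use t dg in \<open>auto simp: has_field_derivative_def\<close>)
  then obtain x where x: "x \<in> {0..t}" "g t - g 0 = t * g' x" by auto
  have "g' x = (f' x - L * f x - c) * exp (- (L * x))"
    unfolding g'_def using L by (simp add: field_simps)
  also have "\<dots> \<le> 0" using le[of x] x t by (intro mult_nonpos_nonneg) auto
  finally have "g t \<le> g 0" using x t by (smt (verit) atLeastAtMost_iff mult_nonneg_nonpos)
  then have "(f t + c / L) * exp (- (L * t)) * exp (L * t) \<le> (f 0 + c / L) * exp (L * t)"
    unfolding g_def by (simp add: mult_right_mono)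
  then show ?thesis by (simp add: mult.assoc flip: exp_add)
qed

definition ode_solution :: "('a::real_normed_vector \<Rightarrow> 'a) \<Rightarrow> real \<Rightarrow> 'a \<Rightarrow> (real \<Rightarrow> 'a) \<Rightarrow> bool" where
  "ode_solution H s p w \<longleftrightarrow> w 0 = p \<and> (\<forall>r\<in>{0..s}. (w has_vector_derivative H (w r)) (at r within {0..s}))"

lemma ode_solution_derivative_within:
  assumes "ode_solution H s p w" "t \<in> {0..s}" "r \<in> {0..t}"
  shows "(w has_vector_derivative H (w r)) (at r within {0..t})"
proof -
  have "(w has_vector_derivative H (w r)) (at r within {0..s})"
    using assms unfolding ode_solution_def by auto
  then show ?thesis by (rule has_vector_derivative_within_subset) (use assms in auto)
qed

lemma ode_solution_norm_eq:
  fixes H :: "'a::real_inner \<Rightarrow> 'a"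
  assumes orth: "\<And>z. z \<bullet> H z = 0" and sol: "ode_solution H s p w" and t: "t \<in> {0..s}"
  shows "norm (w t) = norm p"
proof -
  have d: "((\<lambda>x. w x \<bullet> w x) has_derivative (\<lambda>h. 0 * h)) (at r within {0..t})" if "r \<in> {0..t}" for r
  proof -
    have "((\<lambda>x. w x \<bullet> w x) has_vector_derivative (w r \<bullet> H (w r) + H (w r) \<bullet> w r)) (at r within {0..t})"
      by (rule bounded_bilinear.has_vector_derivative[OF bounded_bilinear_inner])
         (use ode_solution_derivative_within[OF sol t that] in auto)
    then show ?thesis
      using orth[of "w r"] by (simp add: inner_commute has_vector_derivative_def)
  qed
  have "\<exists>x\<in>{0..t}. w t \<bullet> w t - w 0 \<bullet> w 0 = (\<lambda>h. 0 * h) (t - 0)"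
    by (rule mvt_very_simple[of 0 t "\<lambda>x. w x \<bullet> w x"]) (use t d in auto)
  then have "w t \<bullet> w t = w 0 \<bullet> w 0" by auto
  then show ?thesis using sol unfolding ode_solution_def by (simp add: norm_eq_sqrt_inner)
qed

lemma ode_solution_unique:
  fixes H :: "'a::real_inner \<Rightarrow> 'a"
  assumes sol1: "ode_solution H s p w1" and sol2: "ode_solution H s p w2"
    and lip: "\<And>z1 z2. norm z1 \<le> R \<Longrightarrow> norm z2 \<le> R \<Longrightarrow> norm (H z1 - H z2) \<le> L * norm (z1 - z2)"
    and L: "0 \<le> L"
    and b1: "\<And>t. t \<in> {0..s} \<Longrightarrow> norm (w1 t) \<le> R" and b2: "\<And>t. t \<in> {0..s} \<Longrightarrow> norm (w2 t) \<le> R"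
    and t: "t \<in> {0..s}"
  shows "w1 t = w2 t"
proof -
  define f where "f x = (w1 x - w2 x) \<bullet> (w1 x - w2 x)" for x
  define f' where "f' x = 2 * ((w1 x - w2 x) \<bullet> (H (w1 x) - H (w2 x)))" for x
  have d: "(f has_real_derivative f' r) (at r within {0..s})" if "r \<in> {0..s}" for r
  proof -
    have dw: "((\<lambda>x. w1 x - w2 x) has_vector_derivative (H (w1 r) - H (w2 r))) (at r within {0..s})"
      using sol1 sol2 that unfolding ode_solution_def by (auto intro!: derivative_eq_intros)
    have "(f has_vector_derivative ((w1 r - w2 r) \<bullet> (H (w1 r) - H (w2 r)) + (H (w1 r) - H (w2 r)) \<bullet> (w1 r - w2 r))) (at r within {0..s})"
      unfolding f_def by (rule bounded_bilinear.has_vector_derivative[OF bounded_bilinear_inner dw dw])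
    then show ?thesis unfolding f'_def by (simp add: inner_commute has_real_derivative_iff_has_vector_derivative)
  qed
  have le: "f' r \<le> (2 * L + 1) * f r + 0" if "r \<in> {0..s}" for r
  proof -
    have "f' r \<le> 2 * (norm (w1 r - w2 r) * norm (H (w1 r) - H (w2 r)))"
      unfolding f'_def using norm_cauchy_schwarz by simp
    also have "\<dots> \<le> 2 * (norm (w1 r - w2 r) * (L * norm (w1 r - w2 r)))"
      using lip[OF b1[OF that] b2[OF that]] by (simp add: mult_left_mono)
    also have "\<dots> = 2 * L * f r"
      unfolding f_def by (simp add: power2_norm_eq_inner[symmetric] power2_eq_square)
    also have "\<dots> \<le> (2 * L + 1) * f r" unfolding f_def by (simp add: mult_right_mono)
    finally show ?thesis by simp
  qed
  have "f t + 0 / (2 * L + 1) \<le> (f 0 + 0 / (2 * L + 1)) * exp ((2 * L + 1) * t)"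
    by (rule gronwall_affine[OF _ _ d le t]) (use L t in auto)
  moreover have "f 0 = 0" using sol1 sol2 unfolding ode_solution_def f_def by simp
  ultimately have "f t \<le> 0" by simp
  then show ?thesis unfolding f_def by (metis inner_ge_zero inner_eq_zero_iff eq_iff_diff_eq_0 order_antisym)
qed

lemma has_integral_power_atLeastAtMost:
  assumes "0 \<le> t"
  shows "((\<lambda>r::real. r^n) has_integral t^Suc n / Suc n) {0..t}"
proof -
  have "((\<lambda>r. r^n) has_integral (t^Suc n / Suc n - 0^Suc n / Suc n)) {0..t}"
  proof (rule fundamental_theorem_of_calculus)
    fix x assume "x \<in> {0..t}"
    have "((\<lambda>r. r^Suc n / Suc n) has_real_derivative Suc n * x^n / Suc n) (at x within {0..t})"
      by (intro derivative_eq_intros) auto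
    then show "((\<lambda>r. r^Suc n / Suc n) has_vector_derivative x^n) (at x within {0..t})"
      by (simp add: has_real_derivative_iff_has_vector_derivative[symmetric])
  qed (use assms in auto)
  then show ?thesis by simp
qed

lemma closest_point_cball_outside:
  fixes z :: "'a::euclidean_space"
  assumes R: "0 \<le> R" "R < norm z"
  shows "closest_point (cball 0 R) z = (R / norm z) *\<^sub>R z"
proof -
  have z: "norm z > 0" using R by linarith
  have "(R / norm z) *\<^sub>R z = closest_point (cball 0 R) z"
  proof (rule closest_point_unique)
    show "(R / norm z) *\<^sub>R z \<in> cball 0 R" using R z by simp
    have "z - (R / norm z) *\<^sub>R z = (1 - R / norm z) *\<^sub>R z" by (simp add: algebra_simps)
    moreover have "\<bar>1 - R / norm z\<bar> * norm z = norm z - R" using R z by (simp add: field_simps)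
    ultimately have "dist z ((R / norm z) *\<^sub>R z) = norm z - R" by (simp add: dist_norm)
    then show "\<forall>y\<in>cball 0 R. dist z ((R / norm z) *\<^sub>R z) \<le> dist z y"
      by (auto simp: dist_norm intro: order_trans[OF _ norm_triangle_ineq2])
  qed auto
  then show ?thesis ..
qed

text \<open>Global existence: solve the globally Lipschitz equation obtained by composing the field
  with the nearest-point retraction onto the ball of radius norm p + 1; as that field is
  still orthogonal to its argument, its solution keeps the norm of p and so solves (N).\<close>

locale N_picard =
  fixes m \<alpha> \<beta> s :: real and p :: "complex \<times> complex"
  assumes m: "m \<ge> 0" and s: "s \<ge> 0"
begin

definition "R = norm p + 1"
definition "G z = N_field m \<alpha> \<beta> (closest_point (cball 0 R) z)"
definition "L = N_lipschitz_const m \<alpha> \<beta> R"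
definition "clamp_time t = max 0 (min s t)"

lemma R_pos: "R > 0" unfolding R_def by (simp add: add_nonneg_pos)
lemma L_nonneg: "L \<ge> 0" unfolding L_def using N_lipschitz_const_nonneg[OF m] .

lemma norm_closest_point_le: "norm (closest_point (cball 0 R) z) \<le> R"
  using closest_point_in_set[of "cball 0 R" z] R_pos by simp

lemma G_lipschitz: "norm (G z1 - G z2) \<le> L * norm (z1 - z2)"
proof -
  have "norm (G z1 - G z2) \<le> L * norm (closest_point (cball 0 R) z1 - closest_point (cball 0 R) z2)"
    unfolding G_def L_def by (rule N_field_lipschitz[OF m norm_closest_point_le norm_closest_point_le])
  also have "\<dots> \<le> L * norm (z1 - z2)"
    using closest_point_lipschitz[of "cball 0 R" z1 z2] R_pos L_nonneg
    by (intro mult_left_mono) (auto simp: dist_norm)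
  finally show ?thesis .
qed

lemma G_bound: "norm (G z) \<le> L * R"
  unfolding G_def L_def by (rule norm_N_field_le[OF m norm_closest_point_le])

lemma inner_G_self: "z \<bullet> G z = 0"
proof (cases "norm z \<le> R")
  case True
  then show ?thesis unfolding G_def by (simp add: closest_point_self inner_N_field_self)
next
  case False
  then have "norm z > 0" using R_pos by linarith
  then have "z \<noteq> 0" "R / norm z > 0" using R_pos by auto
  then show ?thesis
    using False R_pos inner_N_field_self[of "(R / norm z) *\<^sub>R z" m \<alpha> \<beta>]
    unfolding G_def by (simp add: closest_point_cball_outside)
qed

lemma G_continuous: "continuous_on S G"
proof -
  have "L-lipschitz_on S G"
    by (rule lipschitz_onI) (use G_lipschitz L_nonneg in \<open>auto simp: dist_norm\<close>)
  then show ?thesis by (rule lipschitz_on_continuous_on)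
qed

lemma clamp_time_in: "clamp_time t \<in> {0..s}" unfolding clamp_time_def using s by auto
lemma clamp_time_id: "t \<in> {0..s} \<Longrightarrow> clamp_time t = t" unfolding clamp_time_def by auto
lemma clamp_time_continuous: "continuous_on S clamp_time" unfolding clamp_time_def by (intro continuous_intros)

definition "picard_integral w t = p + integral {0..clamp_time t} (\<lambda>r. G (w r))"

lemma picard_integral_bcontfun:
  assumes w: "continuous_on UNIV w"
  shows "picard_integral w \<in> bcontfun"
proof (rule bcontfun_normI)
  have gw: "continuous_on UNIV (\<lambda>r. G (w r))"
    using continuous_on_compose2[OF G_continuous w] by auto
  have "continuous_on {0..s} (\<lambda>x. integral {0..x} (\<lambda>r. G (w r)))"
    by (rule indefinite_integral_continuous_1)
       (rule integrable_continuous_real, rule continuous_on_subset[OF gw], auto)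
  then have "continuous_on UNIV (\<lambda>t. integral {0..clamp_time t} (\<lambda>r. G (w r)))"
    by (rule continuous_on_compose2[OF _ clamp_time_continuous]) (use clamp_time_in in auto)
  then show "continuous_on UNIV (picard_integral w)"
    unfolding picard_integral_def by (intro continuous_intros)
  fix t
  have "norm (integral {0..clamp_time t} (\<lambda>r. G (w r))) \<le> integral {0..clamp_time t} (\<lambda>r. L * R)"
    by (rule integral_norm_bound_integral)
       (auto intro: integrable_continuous_real continuous_on_subset[OF gw] simp: G_bound)
  also have "\<dots> = clamp_time t * (L * R)" using clamp_time_in[of t] by simp
  also have "\<dots> \<le> s * (L * R)"
    using clamp_time_in[of t] L_nonneg R_pos by (intro mult_right_mono) auto
  finally show "norm (picard_integral w t) \<le> norm p + s * (L * R)"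
    unfolding picard_integral_def by (meson add_left_mono norm_triangle_le)
qed

definition "picard w = Bcontfun (picard_integral (apply_bcontfun w))"

lemma picard_apply: "apply_bcontfun (picard w) t = picard_integral (apply_bcontfun w) t"
  unfolding picard_def using picard_integral_bcontfun[of "apply_bcontfun w"] by (simp add: Bcontfun_inverse)

lemma picard_iterate_dist:
  assumes "t \<in> {0..s}"
  shows "dist (apply_bcontfun ((picard ^^ n) w1) t) (apply_bcontfun ((picard ^^ n) w2) t)
           \<le> (L * t)^n / fact n * dist w1 w2"
  using assms
proof (induction n arbitrary: t)
  case 0
  then show ?case by (simp add: dist_bounded)
next
  case (Suc n)
  define x1 where "x1 = apply_bcontfun ((picard ^^ n) w1)"
  define x2 where "x2 = apply_bcontfun ((picard ^^ n) w2)"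
  define D where "D = dist w1 w2"
  have t: "0 \<le> t" using Suc.prems by auto
  have c1: "continuous_on S (\<lambda>r. G (x1 r))" for S
    using continuous_on_compose2[OF G_continuous, of S x1] unfolding x1_def by auto
  have c2: "continuous_on S (\<lambda>r. G (x2 r))" for S
    using continuous_on_compose2[OF G_continuous, of S x2] unfolding x2_def by auto
  have "dist (apply_bcontfun ((picard ^^ Suc n) w1) t) (apply_bcontfun ((picard ^^ Suc n) w2) t)
      = norm (integral {0..t} (\<lambda>r. G (x1 r)) - integral {0..t} (\<lambda>r. G (x2 r)))"
    using clamp_time_id[OF Suc.prems] by (simp add: picard_apply picard_integral_def x1_def x2_def dist_norm)
  also have "\<dots> = norm (integral {0..t} (\<lambda>r. G (x1 r) - G (x2 r)))"
    by (subst integral_diff) (auto intro: integrable_continuous_real c1 c2)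
  also have "\<dots> \<le> integral {0..t} (\<lambda>r. (L * (L^n / fact n * D)) * r^n)"
  proof (rule integral_norm_bound_integral)
    show "(\<lambda>r. G (x1 r) - G (x2 r)) integrable_on {0..t}"
      by (auto intro!: integrable_continuous_real continuous_intros c1 c2)
    show "(\<lambda>r. (L * (L^n / fact n * D)) * r^n) integrable_on {0..t}"
      by (auto intro!: integrable_continuous_real continuous_intros)
    fix r assume r: "r \<in> {0..t}"
    have "norm (G (x1 r) - G (x2 r)) \<le> L * dist (x1 r) (x2 r)" using G_lipschitz by (simp add: dist_norm)
    also have "\<dots> \<le> L * ((L * r)^n / fact n * D)"
      using Suc.IH[of r] r Suc.prems L_nonneg unfolding x1_def x2_def D_def by (intro mult_left_mono) auto
    finally show "norm (G (x1 r) - G (x2 r)) \<le> (L * (L^n / fact n * D)) * r^n"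
      by (simp add: power_mult_distrib mult_ac)
  qed
  also have "\<dots> = (L * t)^(Suc n) / fact (Suc n) * D"
  proof -
    have "((\<lambda>r. (L * (L^n / fact n * D)) * r^n) has_integral (L * t)^(Suc n) / fact (Suc n) * D) {0..t}"
      using has_integral_mult_right[OF has_integral_power_atLeastAtMost[OF t, of n], of "L * (L^n / fact n * D)"]
      by (simp add: power_mult_distrib field_simps)
    then show ?thesis by (rule integral_unique)
  qed
  finally show ?case unfolding D_def .
qed

lemma picard_iterate_contraction:
  assumes "n \<ge> 1"
  shows "dist ((picard ^^ n) w1) ((picard ^^ n) w2) \<le> (L * s)^n / fact n * dist w1 w2"
proof (rule dist_bound)
  fix t
  obtain k where n: "n = Suc k" using assms by (cases n) auto
  have "apply_bcontfun ((picard ^^ n) w) t = apply_bcontfun ((picard ^^ n) w) (clamp_time t)" for w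
    unfolding n using clamp_time_id[OF clamp_time_in] by (simp add: picard_apply picard_integral_def)
  moreover have "(L * clamp_time t)^n / fact n * dist w1 w2 \<le> (L * s)^n / fact n * dist w1 w2"
    using clamp_time_in[of t] L_nonneg
    by (intro mult_right_mono divide_right_mono power_mono mult_left_mono) auto
  moreover have "dist (apply_bcontfun ((picard ^^ n) w1) (clamp_time t)) (apply_bcontfun ((picard ^^ n) w2) (clamp_time t))
      \<le> (L * clamp_time t)^n / fact n * dist w1 w2"
    by (rule picard_iterate_dist[OF clamp_time_in])
  ultimately show "dist (apply_bcontfun ((picard ^^ n) w1) t) (apply_bcontfun ((picard ^^ n) w2) t)
      \<le> (L * s)^n / fact n * dist w1 w2"
    by simp
qed

lemma picard_fixpoint_exists: "\<exists>w. picard w = w"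
proof -
  have "(\<lambda>n. (L * s)^n / fact n) \<longlonglongrightarrow> 0"
    using summable_LIMSEQ_zero[OF summable_exp_generic[of "L * s"]] by (simp add: divide_inverse mult.commute)
  then obtain N0 where N0: "\<And>n. n \<ge> N0 \<Longrightarrow> \<bar>(L * s)^n / fact n\<bar> < 1"
    using LIMSEQ_D[of _ 0 1] by fastforce
  define N where "N = Suc N0"
  have "\<exists>!x. (picard ^^ N) x = x"
    by (rule banach_fix_type[of "(L * s)^N / fact N"])
       (use N0[of N] L_nonneg s picard_iterate_contraction[of N] in \<open>auto simp: N_def\<close>)
  then obtain x where x: "(picard ^^ N) x = x" "\<And>y. (picard ^^ N) y = y \<Longrightarrow> y = x" by auto
  have "(picard ^^ N) (picard x) = picard x"
    by (metis funpow_swap1 x(1))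
  then show ?thesis using x(2) by blast
qed

lemma ode_solution_exists: "\<exists>w. ode_solution (N_field m \<alpha> \<beta>) s p w"
proof -
  obtain x where x: "picard x = x" using picard_fixpoint_exists by blast
  define w where "w = apply_bcontfun x"
  have weq: "w t = p + integral {0..t} (\<lambda>r. G (w r))" if "t \<in> {0..s}" for t
    using picard_apply[of x t] clamp_time_id[OF that] unfolding x w_def picard_integral_def by simp
  have gw: "continuous_on S (\<lambda>r. G (w r))" for S
    using continuous_on_compose2[OF G_continuous, of S w] unfolding w_def by auto
  have "w 0 = p" using weq[of 0] s by simp
  moreover have "(w has_vector_derivative G (w r)) (at r within {0..s})" if r: "r \<in> {0..s}" for r
  proof (rule has_vector_derivative_transform[OF r])
    show "((\<lambda>t. p + integral {0..t} (\<lambda>r. G (w r))) has_vector_derivative G (w r)) (at r within {0..s})"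
      using integral_has_vector_derivative[OF gw r] by (auto intro!: derivative_eq_intros)
  qed (use weq in auto)
  ultimately have sol: "ode_solution G s p w" unfolding ode_solution_def by blast
  have "G (w t) = N_field m \<alpha> \<beta> (w t)" if "t \<in> {0..s}" for t
    using ode_solution_norm_eq[OF inner_G_self sol that]
    unfolding G_def R_def by (simp add: closest_point_self)
  then have "ode_solution (N_field m \<alpha> \<beta>) s p w" using sol unfolding ode_solution_def by simp
  then show ?thesis by blast
qed

end

lemma N_flow_eq:
  assumes m: "m \<ge> 0" and s: "s \<ge> 0" and w: "ode_solution (N_field m \<alpha> \<beta>) s p w"
  shows "N_flow m \<alpha> \<beta> s p = w s"
proof -
  have norm_eq: "norm (v t) = norm p" if "ode_solution (N_field m \<alpha> \<beta>) s p v" "t \<in> {0..s}" for v t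
    by (rule ode_solution_norm_eq[OF inner_N_field_self that])
  have unique: "v s = w s" if v: "ode_solution (N_field m \<alpha> \<beta>) s p v" for v
    by (rule ode_solution_unique[OF v w N_field_lipschitz[OF m] N_lipschitz_const_nonneg[OF m]])
       (use norm_eq[OF v] norm_eq[OF w] s in auto)
  show ?thesis unfolding N_flow_def
  proof (rule the_equality)
    show "\<exists>v. v 0 = p \<and> v s = w s \<and> (\<forall>r\<in>{0..s}. (v has_vector_derivative N_field m \<alpha> \<beta> (v r)) (at r within {0..s}))"
      using w unfolding ode_solution_def by blast
    fix q assume "\<exists>v. v 0 = p \<and> v s = q \<and> (\<forall>r\<in>{0..s}. (v has_vector_derivative N_field m \<alpha> \<beta> (v r)) (at r within {0..s}))"
    then show "q = w s" using unique unfolding ode_solution_def by blast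
  qed
qed

lemma N_flow_solution:
  assumes m: "m \<ge> 0" and s: "s \<ge> 0"
  obtains w where "ode_solution (N_field m \<alpha> \<beta>) s p w" "N_flow m \<alpha> \<beta> s p = w s"
proof -
  interpret N_picard m \<alpha> \<beta> s p by (rule N_picard.intro) (use m s in auto)
  show ?thesis using that ode_solution_exists N_flow_eq[OF m s] by blast
qed

lemma norm_N_flow:
  assumes m: "m \<ge> 0" and s: "s \<ge> 0"
  shows "norm (N_flow m \<alpha> \<beta> s p) = norm p"
proof -
  obtain w where "ode_solution (N_field m \<alpha> \<beta>) s p w" "N_flow m \<alpha> \<beta> s p = w s"
    using N_flow_solution[OF m s] .
  then show ?thesis using ode_solution_norm_eq[OF inner_N_field_self] s by simp
qed

lemma ode_solution_N_field_swap:
  assumes w: "ode_solution (N_field m \<alpha> \<beta>) s p w"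
  shows "ode_solution (N_field m \<alpha> \<beta>) s (snd p, fst p) (\<lambda>t. (snd (w t), fst (w t)))"
  unfolding ode_solution_def
proof (intro conjI ballI)
  show "(snd (w 0), fst (w 0)) = (snd p, fst p)" using w unfolding ode_solution_def by simp
  fix r assume r: "r \<in> {0..s}"
  have d: "(w has_vector_derivative N_field m \<alpha> \<beta> (w r)) (at r within {0..s})"
    using w r unfolding ode_solution_def by auto
  show "((\<lambda>t. (snd (w t), fst (w t))) has_vector_derivative N_field m \<alpha> \<beta> (snd (w r), fst (w r))) (at r within {0..s})"
    unfolding N_field_swap
    by (intro has_vector_derivative_Pair bounded_linear.has_vector_derivative[OF bounded_linear_snd d]
          bounded_linear.has_vector_derivative[OF bounded_linear_fst d])
qed

lemma N_flow_swap:
  assumes m: "m \<ge> 0" and s: "s \<ge> 0"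
  shows "N_flow m \<alpha> \<beta> s (snd p, fst p) = (snd (N_flow m \<alpha> \<beta> s p), fst (N_flow m \<alpha> \<beta> s p))"
proof -
  obtain w where w: "ode_solution (N_field m \<alpha> \<beta>) s p w" "N_flow m \<alpha> \<beta> s p = w s"
    using N_flow_solution[OF m s] .
  show ?thesis using N_flow_eq[OF m s ode_solution_N_field_swap[OF w(1)]] w(2) by simp
qed

section \<open>One step of the nonlinear flow\<close>

lemma norm_cross_term_le: "cmod (cnj u * v + u * cnj v) \<le> 2 * cmod u * cmod v"
  using norm_triangle_ineq[of "cnj u * v" "u * cnj v"] by (simp add: norm_mult)

lemma norm_beta_term_le:
  assumes "cmod q \<le> Q"
  shows "cmod (2 * \<i> * of_real \<beta> * q * v) \<le> 2 * \<bar>\<beta>\<bar> * Q * cmod v"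
proof -
  have "cmod (2 * \<i> * of_real \<beta> * q * v) = (2 * \<bar>\<beta>\<bar>) * (cmod q * cmod v)" by (simp add: norm_mult)
  also have "\<dots> \<le> (2 * \<bar>\<beta>\<bar>) * (Q * cmod v)"
    by (intro mult_left_mono mult_right_mono assms) auto
  finally show ?thesis by simp
qed

lemma norm_N_comp_le: "cmod (N_comp m \<alpha> \<beta> u v) \<le> \<bar>m\<bar> * cmod v + (\<bar>\<alpha>\<bar> + 4 * \<bar>\<beta>\<bar>) * cmod u * (cmod v)^2"
proof -
  have "cmod (N_comp m \<alpha> \<beta> u v) \<le> cmod (\<i> * of_real m * v) + cmod (\<i> * of_real \<alpha> * u * of_real ((cmod v)^2))
      + cmod (2 * \<i> * of_real \<beta> * (cnj u * v + u * cnj v) * v)"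
    unfolding N_comp_def by (rule order_trans[OF norm_triangle_ineq add_right_mono[OF norm_triangle_ineq]])
  also have "cmod (2 * \<i> * of_real \<beta> * (cnj u * v + u * cnj v) * v) \<le> 2 * \<bar>\<beta>\<bar> * (2 * cmod u * cmod v) * cmod v"
    by (rule norm_beta_term_le[OF norm_cross_term_le])
  finally show ?thesis by (simp add: norm_mult power2_eq_square algebra_simps)
qed

lemma inner_N_comp_self_le:
  "v \<bullet> N_comp m \<alpha> \<beta> v u \<le> \<bar>m\<bar> * cmod u * cmod v + 4 * \<bar>\<beta>\<bar> * (cmod u)^2 * (cmod v)^2"
proof -
  define b where "b = 2 * \<i> * of_real \<beta> * (cnj v * u + v * cnj u) * u"
  have "v \<bullet> N_comp m \<alpha> \<beta> v u = v \<bullet> (\<i> * of_real m * u) + v \<bullet> (\<i> * of_real (\<alpha> * (cmod u)^2) * v) + v \<bullet> b"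
    unfolding N_comp_def b_def by (simp add: inner_add_right algebra_simps)
  moreover have "v \<bullet> (\<i> * of_real (\<alpha> * (cmod u)^2) * v) = 0"
    by (simp add: inner_complex_def algebra_simps)
  moreover have "v \<bullet> (\<i> * of_real m * u) \<le> \<bar>m\<bar> * cmod u * cmod v"
    using norm_cauchy_schwarz[of v "\<i> * of_real m * u"] by (simp add: norm_mult mult_ac)
  moreover have "v \<bullet> b \<le> 4 * \<bar>\<beta>\<bar> * (cmod u)^2 * (cmod v)^2"
  proof -
    have "cmod v * cmod b \<le> cmod v * (2 * \<bar>\<beta>\<bar> * (2 * cmod v * cmod u) * cmod u)"
      unfolding b_def by (intro mult_left_mono norm_beta_term_le norm_cross_term_le) simp
    then show ?thesis using norm_cauchy_schwarz[of v b] by (simp add: power2_eq_square mult_ac)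
  qed
  ultimately show ?thesis by linarith
qed

text \<open>AM-GM with weight \<open>\<tau>\<close>: the linear coupling then only contributes \<open>m \<tau> \<rho>\<close>, which
  turns into the \<open>\<tau>\<^sup>2\<close> term of the Gronwall bound below.\<close>

lemma inner_N_comp_energy_le:
  assumes m: "m \<ge> 0" and \<tau>: "0 < \<tau>" and \<rho>: "(cmod u)^2 + (cmod v)^2 = \<rho>"
  shows "2 * (v \<bullet> N_comp m \<alpha> \<beta> v u) \<le> ((m + 1) / \<tau> + 8 * \<bar>\<beta>\<bar> * \<rho>) * (cmod v)^2 + m * \<tau> * \<rho>"
proof -
  have amgm: "2 * cmod u * cmod v \<le> \<tau> * (cmod u)^2 + (cmod v)^2 / \<tau>"
  proof -
    have "0 \<le> (\<tau> * cmod u - cmod v)^2 / \<tau>" using \<tau> by simp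
    also have "\<dots> = \<tau> * (cmod u)^2 + (cmod v)^2 / \<tau> - 2 * cmod u * cmod v"
      using \<tau> by (simp add: field_simps power2_eq_square)
    finally show ?thesis by simp
  qed
  have "2 * (v \<bullet> N_comp m \<alpha> \<beta> v u) \<le> m * (2 * cmod u * cmod v) + 8 * \<bar>\<beta>\<bar> * (cmod u)^2 * (cmod v)^2"
    using inner_N_comp_self_le[of v m \<alpha> \<beta> u] m by simp
  also have "\<dots> \<le> m * (\<tau> * \<rho> + (cmod v)^2 / \<tau>) + 8 * \<bar>\<beta>\<bar> * \<rho> * (cmod v)^2"
  proof (intro add_mono mult_left_mono mult_right_mono)
    have "\<tau> * (cmod u)^2 \<le> \<tau> * \<rho>"
      using \<rho> \<tau> zero_le_power2[of "cmod v"] by (intro mult_left_mono) linarith+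
    then show "2 * cmod u * cmod v \<le> \<tau> * \<rho> + (cmod v)^2 / \<tau>"
      using amgm by linarith
  qed (use m \<rho> in auto)
  also have "\<dots> \<le> ((m + 1) / \<tau> + 8 * \<bar>\<beta>\<bar> * \<rho>) * (cmod v)^2 + m * \<tau> * \<rho>"
    using \<tau> by (simp add: field_simps)
  finally show ?thesis .
qed

lemma N_solution_snd_power2_le:
  assumes m: "m \<ge> 0" and \<tau>: "0 < \<tau>" and w: "ode_solution (N_field m \<alpha> \<beta>) \<tau> (a, b) w"
    and t: "t \<in> {0..\<tau>}" and M: "\<tau> * ((cmod a)^2 + (cmod b)^2) \<le> M"
  shows "(cmod (snd (w t)))^2 \<le> exp (m + 1 + 8 * \<bar>\<beta>\<bar> * M) * ((cmod b)^2 + \<tau>^2 * ((cmod a)^2 + (cmod b)^2))"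
proof -
  define \<rho> where "\<rho> = (cmod a)^2 + (cmod b)^2"
  define f where "f r = snd (w r) \<bullet> snd (w r)" for r
  define f' where "f' r = 2 * (snd (w r) \<bullet> snd (N_field m \<alpha> \<beta> (w r)))" for r
  define L where "L = (m + 1) / \<tau> + 8 * \<bar>\<beta>\<bar> * \<rho>"
  define c where "c = m * \<tau> * \<rho>"
  have \<rho>0: "\<rho> \<ge> 0" unfolding \<rho>_def by simp
  have L: "L > 0" unfolding L_def using \<tau> m \<rho>0 by (simp add: add_pos_nonneg)
  have c: "0 \<le> c / L" unfolding c_def using m \<tau> \<rho>0 L by simp
  have fsq: "f r = (cmod (snd (w r)))^2" for r unfolding f_def by (simp add: power2_norm_eq_inner)
  have der: "(f has_real_derivative f' r) (at r within {0..\<tau>})" if r: "r \<in> {0..\<tau>}" for r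
  proof -
    have d: "((\<lambda>x. snd (w x)) has_vector_derivative snd (N_field m \<alpha> \<beta> (w r))) (at r within {0..\<tau>})"
      using w r unfolding ode_solution_def by (auto intro: bounded_linear.has_vector_derivative[OF bounded_linear_snd])
    show ?thesis
      using bounded_bilinear.has_vector_derivative[OF bounded_bilinear_inner d d]
      unfolding f_def f'_def by (simp add: inner_commute has_real_derivative_iff_has_vector_derivative)
  qed
  have le: "f' r \<le> L * f r + c" if r: "r \<in> {0..\<tau>}" for r
  proof -
    have "(norm (w r))^2 = (norm (a, b))^2"
      using ode_solution_norm_eq[OF inner_N_field_self w r] by simp
    then have "(cmod (fst (w r)))^2 + (cmod (snd (w r)))^2 = \<rho>"
      unfolding power2_norm_prod \<rho>_def by simp
    then show ?thesis unfolding f'_def fsq L_def c_def N_field_eq_N_comp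
      using inner_N_comp_energy_le[OF m \<tau>] by simp
  qed
  have "f t + c / L \<le> (f 0 + c / L) * exp (L * t)"
    by (rule gronwall_affine[OF _ L der le t]) (use \<tau> in auto)
  moreover have "c / L \<le> \<tau>^2 * \<rho>"
  proof -
    have q: "0 < (m + 1) / \<tau>" "(m + 1) / \<tau> \<le> L" using \<tau> m \<rho>0 unfolding L_def by auto
    have "c / L \<le> c / ((m + 1) / \<tau>)"
      by (rule divide_left_mono) (use q mult_pos_pos[OF L q(1)] m \<tau> \<rho>0 in \<open>auto simp: c_def\<close>)
    also have "\<dots> = m / (m + 1) * (\<tau>^2 * \<rho>)" unfolding c_def using m \<tau> by (simp add: field_simps power2_eq_square)
    also have "\<dots> \<le> \<tau>^2 * \<rho>" using m \<rho>0 by (intro mult_left_le_one_le) auto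
    finally show ?thesis .
  qed
  moreover have "exp (L * t) \<le> exp (m + 1 + 8 * \<bar>\<beta>\<bar> * M)"
  proof -
    have "L * t \<le> L * \<tau>" using t L by (intro mult_left_mono) auto
    also have "\<dots> = m + 1 + 8 * \<bar>\<beta>\<bar> * (\<tau> * \<rho>)" unfolding L_def using \<tau> by (simp add: field_simps)
    also have "\<dots> \<le> m + 1 + 8 * \<bar>\<beta>\<bar> * M" using M unfolding \<rho>_def by (simp add: mult_left_mono)
    finally show ?thesis by simp
  qed
  moreover have "f 0 = (cmod b)^2" using w unfolding ode_solution_def fsq by simp
  ultimately have "f t \<le> ((cmod b)^2 + \<tau>^2 * \<rho>) * exp (m + 1 + 8 * \<bar>\<beta>\<bar> * M)"
    using c \<rho>0 by (smt (verit, best) exp_ge_zero mult_mono zero_le_power2)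
  then show ?thesis unfolding fsq \<rho>_def by (simp add: mult.commute)
qed

lemma N_solution_fst_power2_le:
  assumes m: "m \<ge> 0" and \<tau>: "0 < \<tau>" and w: "ode_solution (N_field m \<alpha> \<beta>) \<tau> (a, b) w"
    and t: "t \<in> {0..\<tau>}" and M: "\<tau> * ((cmod a)^2 + (cmod b)^2) \<le> M"
  shows "(cmod (fst (w t)))^2 \<le> exp (m + 1 + 8 * \<bar>\<beta>\<bar> * M) * ((cmod a)^2 + \<tau>^2 * ((cmod a)^2 + (cmod b)^2))"
  using N_solution_snd_power2_le[OF m \<tau> ode_solution_N_field_swap[OF w] t] M by (simp add: add.commute)

lemma ode_solution_fst_increment_le:
  assumes w: "ode_solution H \<tau> p w" and \<tau>: "0 \<le> \<tau>"
    and B: "\<And>x. x \<in> {0..\<tau>} \<Longrightarrow> norm (fst (H (w x))) \<le> B"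
  shows "norm (fst (w \<tau>) - fst p) \<le> B * \<tau>"
proof -
  have "norm (fst (w \<tau>) - fst (w 0)) \<le> B * norm (\<tau> - 0)"
  proof (rule differentiable_bound[where f' = "\<lambda>x h. h *\<^sub>R fst (H (w x))"])
    fix x assume x: "x \<in> {0..\<tau>}"
    have "(w has_vector_derivative H (w x)) (at x within {0..\<tau>})"
      using w x unfolding ode_solution_def by auto
    then show "((\<lambda>t. fst (w t)) has_derivative (\<lambda>h. h *\<^sub>R fst (H (w x)))) (at x within {0..\<tau>})"
      using bounded_linear.has_vector_derivative[OF bounded_linear_fst] by (simp add: has_vector_derivative_def)
    show "onorm (\<lambda>h. h *\<^sub>R fst (H (w x))) \<le> B"
      using B[OF x] onorm_scaleR_left[OF bounded_linear_ident, of "fst (H (w x))"] by (simp add: onorm_id)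
  qed (use \<tau> in auto)
  then show ?thesis using w \<tau> unfolding ode_solution_def by simp
qed

lemma cubic_step_ineq:
  fixes A B r t M :: real
  assumes A: "0 \<le> A" and B: "0 \<le> B" and t0: "0 \<le> t" and t1: "t \<le> 1"
    and r: "r \<le> A + B" "A \<le> r" "B \<le> r" and M: "t * r^2 \<le> M"
  shows "t * (A + t * r) * (B + t * r)^2 \<le> 2 * t * A * B^2 + 4 * M * (t * A + t * B)"
proof -
  have r0: "0 \<le> r" using A r by linarith
  have M0: "0 \<le> M" using M t0 r0 by (meson order_trans mult_nonneg_nonneg zero_le_power2)
  have "(B + t * r)^2 \<le> 2 * B^2 + 2 * t^2 * r^2"
    using zero_le_power2[of "B - t * r"] by (simp add: power2_eq_square algebra_simps)
  then have "t * (A + t * r) * (B + t * r)^2 \<le> t * (A + t * r) * (2 * B^2 + 2 * t^2 * r^2)"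
    using A t0 r0 by (intro mult_left_mono) auto
  also have "\<dots> = 2 * t * A * B^2 + 2 * (t * B) * (t * r * B) + 2 * (t * A) * (t * (t * r^2)) + 2 * (t * r) * (t^2 * (t * r^2))"
    by (simp add: power2_eq_square power3_eq_cube algebra_simps)
  also have "\<dots> \<le> 2 * t * A * B^2 + 2 * (t * B) * M + 2 * (t * A) * M + 2 * (t * r) * M"
  proof -
    have "t * r * B \<le> t * r^2" using mult_left_mono[OF r(3), of "t * r"] t0 r0 by (simp add: power2_eq_square)
    then have "(t * B) * (t * r * B) \<le> (t * B) * M" using M B t0 by (intro mult_left_mono) auto
    moreover have "t * (t * r^2) \<le> 1 * M" using t1 t0 M M0 by (intro mult_mono) auto
    then have "(t * A) * (t * (t * r^2)) \<le> (t * A) * M" using A t0 by (intro mult_left_mono) auto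
    moreover have "t^2 * (t * r^2) \<le> 1 * M" using t1 t0 M M0 by (intro mult_mono) (auto simp: power_le_one)
    then have "(t * r) * (t^2 * (t * r^2)) \<le> (t * r) * M" using r0 t0 by (intro mult_left_mono) auto
    ultimately show ?thesis by linarith
  qed
  also have "\<dots> \<le> 2 * t * A * B^2 + 4 * M * (t * A + t * B)"
  proof -
    have "t * r \<le> t * A + t * B" using r t0 by (simp add: distrib_left[symmetric] mult_left_mono)
    then have "(t * r) * M \<le> (t * A + t * B) * M" using M0 by (intro mult_right_mono) auto
    then show ?thesis by (simp add: algebra_simps)
  qed
  finally show ?thesis .
qed

definition step_growth :: "real \<Rightarrow> real \<Rightarrow> real \<Rightarrow> real" where
  "step_growth m \<beta> M = sqrt (exp (m + 1 + 8 * \<bar>\<beta>\<bar> * M))"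

definition step_const :: "real \<Rightarrow> real \<Rightarrow> real \<Rightarrow> real \<Rightarrow> real" where
  "step_const m \<alpha> \<beta> M = 2 * m * step_growth m \<beta> M + (\<bar>\<alpha>\<bar> + 4 * \<bar>\<beta>\<bar>) * step_growth m \<beta> M ^ 3 * (2 + 4 * M)"

lemma step_growth_pos: "step_growth m \<beta> M > 0"
  unfolding step_growth_def by simp

lemma step_const_nonneg: "m \<ge> 0 \<Longrightarrow> M \<ge> 0 \<Longrightarrow> step_const m \<alpha> \<beta> M \<ge> 0"
  unfolding step_const_def using step_growth_pos[of m \<beta> M] by simp

lemma le_sqrt_mult_add:
  assumes "x^2 \<le> E * (A^2 + T^2)" "0 \<le> x" "0 \<le> A" "0 \<le> T" "0 \<le> E"
  shows "x \<le> sqrt E * (A + T)"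
proof -
  have "x = sqrt (x^2)" using assms by simp
  also have "\<dots> \<le> sqrt (E * (A^2 + T^2))" using assms(1) by (rule real_sqrt_le_mono)
  also have "\<dots> = sqrt E * sqrt (A^2 + T^2)" by (simp add: real_sqrt_mult)
  also have "\<dots> \<le> sqrt E * (A + T)" using assms by (intro mult_left_mono sqrt_sum_squares_le_sum) auto
  finally show ?thesis .
qed

lemma N_solution_comp_le:
  assumes m: "m \<ge> 0" and \<tau>: "0 < \<tau>" and w: "ode_solution (N_field m \<alpha> \<beta>) \<tau> (a, b) w"
    and t: "t \<in> {0..\<tau>}" and M: "\<tau> * ((cmod a)^2 + (cmod b)^2) \<le> M"
  shows "cmod (fst (w t)) \<le> step_growth m \<beta> M * (cmod a + \<tau> * norm (a, b))"
    and "cmod (snd (w t)) \<le> step_growth m \<beta> M * (cmod b + \<tau> * norm (a, b))"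
proof -
  have r2: "(\<tau> * norm (a, b))^2 = \<tau>^2 * ((cmod a)^2 + (cmod b)^2)"
    by (simp add: power_mult_distrib norm_Pair)
  show "cmod (fst (w t)) \<le> step_growth m \<beta> M * (cmod a + \<tau> * norm (a, b))"
    unfolding step_growth_def
    using N_solution_fst_power2_le[OF m \<tau> w t M] \<tau> by (intro le_sqrt_mult_add) (simp_all add: r2)
  show "cmod (snd (w t)) \<le> step_growth m \<beta> M * (cmod b + \<tau> * norm (a, b))"
    unfolding step_growth_def
    using N_solution_snd_power2_le[OF m \<tau> w t M] \<tau> by (intro le_sqrt_mult_add) (simp_all add: r2)
qed

lemma step_increment_poly_le:
  fixes A B r \<tau> M m c e :: real
  assumes A: "0 \<le> A" and B: "0 \<le> B" and \<tau>: "0 \<le> \<tau>" "\<tau> \<le> 1"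
    and r: "r \<le> A + B" "A \<le> r" "B \<le> r" and M: "\<tau> * r^2 \<le> M"
    and m: "0 \<le> m" and c: "0 \<le> c" and e: "0 \<le> e"
  shows "(m * (e * (B + \<tau> * r)) + c * (e * (A + \<tau> * r)) * (e * (B + \<tau> * r))^2) * \<tau>
      \<le> (2 * m * e + c * e^3 * (2 + 4 * M)) * (\<tau> * A * B^2 + \<tau> * A + \<tau> * B)"
proof -
  have r0: "0 \<le> r" using A r by linarith
  have M0: "0 \<le> M" using M \<tau> r0 by (meson order_trans mult_nonneg_nonneg zero_le_power2)
  have lin: "\<tau> * B + \<tau> * (\<tau> * r) \<le> \<tau> * A + 2 * (\<tau> * B)"
  proof -
    have "\<tau> * (\<tau> * r) \<le> \<tau> * r" using \<tau> r0 by (simp add: mult_left_le_one_le)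
    also have "\<dots> \<le> \<tau> * A + \<tau> * B" using r \<tau> by (simp add: distrib_left[symmetric] mult_left_mono)
    finally show ?thesis by linarith
  qed
  have "(m * (e * (B + \<tau> * r)) + c * (e * (A + \<tau> * r)) * (e * (B + \<tau> * r))^2) * \<tau>
      = (m * e) * (\<tau> * B + \<tau> * (\<tau> * r)) + (c * e^3) * (\<tau> * (A + \<tau> * r) * (B + \<tau> * r)^2)"
    by (simp add: power2_eq_square power3_eq_cube algebra_simps)
  also have "\<dots> \<le> (m * e) * (\<tau> * A + 2 * (\<tau> * B)) + (c * e^3) * (2 * (\<tau> * A * B^2) + 4 * M * (\<tau> * A + \<tau> * B))"
  proof -
    have "\<tau> * (A + \<tau> * r) * (B + \<tau> * r)^2 \<le> 2 * (\<tau> * A * B^2) + 4 * M * (\<tau> * A + \<tau> * B)"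
      using cubic_step_ineq[OF A B \<tau> r M] by (simp add: mult.assoc)
    then show ?thesis by (intro add_mono mult_left_mono lin) (use m c e in auto)
  qed
  also have "\<dots> \<le> (2 * m * e + c * e^3 * (2 + 4 * M)) * (\<tau> * A * B^2 + \<tau> * A + \<tau> * B)"
  proof -
    have "0 \<le> m * e * (2 * (\<tau> * A * B^2) + \<tau> * A) + c * e^3 * (4 * M * (\<tau> * A * B^2) + 2 * (\<tau> * A) + 2 * (\<tau> * B))"
      using A B \<tau> m c e M0 by (intro add_nonneg_nonneg mult_nonneg_nonneg) auto
    then show ?thesis by (simp add: algebra_simps)
  qed
  finally show ?thesis .
qed

lemma N_flow_fst_increment_le:
  assumes m: "m \<ge> 0" and \<tau>: "0 < \<tau>" "\<tau> \<le> 1" and M: "\<tau> * ((cmod a)^2 + (cmod b)^2) \<le> M"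
  shows "cmod (fst (N_flow m \<alpha> \<beta> \<tau> (a, b)) - a)
           \<le> step_const m \<alpha> \<beta> M * (\<tau> * cmod a * (cmod b)^2 + \<tau> * cmod a + \<tau> * cmod b)"
proof -
  obtain w where w: "ode_solution (N_field m \<alpha> \<beta>) \<tau> (a, b) w" "N_flow m \<alpha> \<beta> \<tau> (a, b) = w \<tau>"
    using N_flow_solution[OF m less_imp_le[OF \<tau>(1)]] by blast
  define r where "r = norm (a, b)"
  define e where "e = step_growth m \<beta> M"
  define c where "c = \<bar>\<alpha>\<bar> + 4 * \<bar>\<beta>\<bar>"
  have r: "r \<le> cmod a + cmod b" "cmod a \<le> r" "cmod b \<le> r"
    unfolding r_def using norm_Pair_le[of a b] norm_fst_le[of a b] norm_snd_le[of b a] by auto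
  have rM: "\<tau> * r^2 \<le> M" using M unfolding r_def by (simp add: norm_Pair)
  have e: "0 \<le> e" using step_growth_pos[of m \<beta> M] unfolding e_def by simp
  have "cmod (fst (w \<tau>) - fst (a, b))
      \<le> (m * (e * (cmod b + \<tau> * r)) + c * (e * (cmod a + \<tau> * r)) * (e * (cmod b + \<tau> * r))^2) * \<tau>"
  proof (rule ode_solution_fst_increment_le[OF w(1)])
    fix x assume x: "x \<in> {0..\<tau>}"
    note bounds = N_solution_comp_le[OF m \<tau>(1) w(1) x M, folded r_def e_def]
    have "cmod (fst (N_field m \<alpha> \<beta> (w x))) \<le> m * cmod (snd (w x)) + c * cmod (fst (w x)) * (cmod (snd (w x)))^2"
      unfolding N_field_eq_N_comp c_def using norm_N_comp_le[of m \<alpha> \<beta> "fst (w x)" "snd (w x)"] m by simp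
    also have "\<dots> \<le> m * (e * (cmod b + \<tau> * r)) + c * (e * (cmod a + \<tau> * r)) * (e * (cmod b + \<tau> * r))^2"
    proof -
      have "0 \<le> c" "0 \<le> e * (cmod a + \<tau> * r)" using e \<tau>(1) by (simp_all add: c_def r_def)
      then show ?thesis
        using bounds m by (intro add_mono mult_left_mono mult_mono power_mono) simp_all
    qed
    finally show "cmod (fst (N_field m \<alpha> \<beta> (w x))) \<le> m * (e * (cmod b + \<tau> * r)) + c * (e * (cmod a + \<tau> * r)) * (e * (cmod b + \<tau> * r))^2" .
  qed (use \<tau> in auto)
  also have "\<dots> \<le> step_const m \<alpha> \<beta> M * (\<tau> * cmod a * (cmod b)^2 + \<tau> * cmod a + \<tau> * cmod b)"
    unfolding step_const_def e_def[symmetric] c_def[symmetric]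
    by (rule step_increment_poly_le[OF _ _ _ \<tau>(2) r rM m _ e]) (use \<tau> in \<open>auto simp: c_def\<close>)
  finally show ?thesis using w(2) by simp
qed

section \<open>The lattice scheme\<close>

lemma sum_int_shift_reindex: "(\<Sum>j\<in>{p..q}. f (j + c)) = (\<Sum>j\<in>{p+c..q+(c::int)}. f j)"
  by (rule sum.reindex_bij_witness[of _ "\<lambda>j. j - c" "\<lambda>j. j + c"]) auto

lemma sum_mono_int_atLeastAtMost:
  fixes f :: "int \<Rightarrow> real"
  assumes "\<And>j. f j \<ge> 0" "p' \<le> p" "q \<le> q'"
  shows "(\<Sum>j\<in>{p..q}. f j) \<le> (\<Sum>j\<in>{p'..q'}. f j)"
  by (rule sum_mono2) (use assms in auto)

lemma sum_int_uminus_reindex: "(\<Sum>j\<in>{p..q}. f (- j)) = (\<Sum>j\<in>{-q..-p::int}. f j)"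
  by (rule sum.reindex_bij_witness[of _ uminus uminus]) auto

lemma power2_add_le: "(x + y)^2 \<le> 2 * x^2 + 2 * (y::real)^2"
proof -
  have "0 \<le> (x - y)^2" by simp
  then show ?thesis by (simp add: power2_eq_square algebra_simps)
qed

lemma discrete_gronwall:
  fixes x c d :: "nat \<Rightarrow> real"
  assumes rec: "\<And>i. x (Suc i) \<le> x i * (1 + c i) + d i" and c: "\<And>i. 0 \<le> c i" and d: "\<And>i. 0 \<le> d i"
    and x: "\<And>i. 0 \<le> x i"
  shows "x k \<le> exp (\<Sum>i<k. c i) * (x 0 + (\<Sum>i<k. d i))"
proof (induction k)
  case 0 then show ?case by simp
next
  case (Suc k)
  define C where "C = (\<Sum>i<k. c i)"
  define D where "D = (\<Sum>i<k. d i)"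
  have D0: "0 \<le> D" unfolding D_def using d by (simp add: sum_nonneg)
  have eC: "1 \<le> exp C" unfolding C_def using c by (simp add: sum_nonneg)
  have "x (Suc k) \<le> x k * (1 + c k) + d k" by (rule rec)
  also have "\<dots> \<le> (exp C * (x 0 + D)) * (1 + c k) + d k"
    using Suc.IH c[of k] unfolding C_def D_def by (intro add_right_mono mult_right_mono) auto
  also have "\<dots> \<le> (exp C * (x 0 + D)) * exp (c k) + exp C * exp (c k) * d k"
  proof -
    have "1 + c k \<le> exp (c k)" by (rule exp_ge_add_one_self)
    then have a: "(exp C * (x 0 + D)) * (1 + c k) \<le> (exp C * (x 0 + D)) * exp (c k)"
      using x[of 0] D0 by (intro mult_left_mono) auto
    have h: "1 \<le> exp (c k)" using c[of k] by simp
    have "1 * 1 \<le> exp C * exp (c k)" by (rule mult_mono[OF eC h]) auto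
    then have "1 \<le> exp C * exp (c k)" by simp
    from mult_right_mono[OF this d[of k]] have b: "d k \<le> exp C * exp (c k) * d k" by simp
    show ?thesis using a b by linarith
  qed
  also have "\<dots> = exp (\<Sum>i<Suc k. c i) * (x 0 + (\<Sum>i<Suc k. d i))"
    unfolding C_def D_def by (simp add: exp_add algebra_simps)
  finally show ?case .
qed

definition window_sum :: "(int \<Rightarrow> real) \<Rightarrow> int \<Rightarrow> int \<Rightarrow> real" where
  "window_sum f p L = (\<Sum>j\<in>{p..p+L-1}. f j)"

lemma window_sum_reflect: "window_sum (\<lambda>j. f (- j)) q L = window_sum f (- q - L + 1) L"
  unfolding window_sum_def sum_int_uminus_reindex by (simp add: algebra_simps)

definition shift_bound :: "real \<Rightarrow> real \<Rightarrow> real \<Rightarrow> real \<Rightarrow> real \<Rightarrow> real" where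
  "shift_bound K M T \<eta> x = (let G = exp (K * (M + T)); \<mu> = 4 * G^2 * \<eta> * exp (2 * G^2 * K^2 * T * T) in
     2 * (K * G * (\<mu> + x))^2 * M + 2 * (K * K * G * (\<mu> + x) + K)^2 * (x^2 * M))"

text \<open>The scheme on the lattice of cells: \<open>A n j\<close> and \<open>B n j\<close> are the two components on
  cell \<open>j\<close> after \<open>n\<close> steps.\<close>

locale splitting_lattice =
  fixes \<Phi> :: "complex \<times> complex \<Rightarrow> complex \<times> complex" and \<tau> K M :: real
    and A B :: "nat \<Rightarrow> int \<Rightarrow> complex"
  assumes tau_pos: "0 < \<tau>" and K_nonneg: "0 \<le> K"
    and norm_flow: "\<And>p. norm (\<Phi> p) = norm p"
    and flow_swap: "\<And>p. \<Phi> (snd p, fst p) = (snd (\<Phi> p), fst (\<Phi> p))"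
    and flow_fst_increment: "\<And>a b. \<tau> * ((cmod a)^2 + (cmod b)^2) \<le> M \<Longrightarrow>
                  cmod (fst (\<Phi> (a, b)) - a) \<le> K * (\<tau> * cmod a * (cmod b)^2 + \<tau> * cmod a + \<tau> * cmod b)"
    and A_Suc: "\<And>n j. A (Suc n) j = fst (\<Phi> (A n (j - 1), B n (j + 1)))"
    and B_Suc: "\<And>n j. B (Suc n) j = snd (\<Phi> (A n (j - 1), B n (j + 1)))"
    and initial_mass_le: "\<And>p q. (\<Sum>j\<in>{p..q}. \<tau> * (cmod (A 0 j))^2 + \<tau> * (cmod (B 0 j))^2) \<le> M"
begin

definition "massA n j = \<tau> * (cmod (A n j))^2"
definition "massB n j = \<tau> * (cmod (B n j))^2"
definition "mass n p q = (\<Sum>j\<in>{p..q}. massA n j + massB n j)"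

lemma massA_nonneg: "massA n j \<ge> 0" unfolding massA_def using tau_pos by simp
lemma massB_nonneg: "massB n j \<ge> 0" unfolding massB_def using tau_pos by simp

lemma mass_cell_Suc: "massA (Suc n) j + massB (Suc n) j = massA n (j - 1) + massB n (j + 1)"
proof -
  have "(norm (\<Phi> (A n (j - 1), B n (j + 1))))^2 = (norm (A n (j - 1), B n (j + 1)))^2" by (simp add: norm_flow)
  then have "(cmod (A (Suc n) j))^2 + (cmod (B (Suc n) j))^2 = (cmod (A n (j - 1)))^2 + (cmod (B n (j + 1)))^2"
    unfolding A_Suc B_Suc by (simp add: norm_Pair power2_norm_prod)
  then have "\<tau> * ((cmod (A (Suc n) j))^2 + (cmod (B (Suc n) j))^2) = \<tau> * ((cmod (A n (j - 1)))^2 + (cmod (B n (j + 1)))^2)"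
    by simp
  then show ?thesis unfolding massA_def massB_def by (simp only: distrib_left)
qed

lemma mass_split: "mass n p q = (\<Sum>j\<in>{p..q}. massA n j) + (\<Sum>j\<in>{p..q}. massB n j)"
  unfolding mass_def by (simp add: sum.distrib)

lemma mass_Suc: "mass (Suc n) p q = (\<Sum>j\<in>{p-1..q-1}. massA n j) + (\<Sum>j\<in>{p+1..q+1}. massB n j)"
proof -
  have "mass (Suc n) p q = (\<Sum>j\<in>{p..q}. massA n (j + (-1))) + (\<Sum>j\<in>{p..q}. massB n (j + 1))"
    unfolding mass_def mass_cell_Suc by (simp add: sum.distrib)
  moreover have "(\<Sum>j\<in>{p..q}. massA n (j + (-1))) = (\<Sum>j\<in>{p+(-1)..q+(-1)}. massA n j)" by (rule sum_int_shift_reindex)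
  moreover have "(\<Sum>j\<in>{p..q}. massB n (j + 1)) = (\<Sum>j\<in>{p+1..q+1}. massB n j)" by (rule sum_int_shift_reindex)
  ultimately show ?thesis by simp
qed

lemma mass_Suc_le: "mass (Suc n) p q \<le> mass n (p - 1) (q + 1)"
proof -
  have "(\<Sum>j\<in>{p-1..q-1}. massA n j) \<le> (\<Sum>j\<in>{p-1..q+1}. massA n j)"
    by (rule sum_mono_int_atLeastAtMost) (auto simp: massA_nonneg)
  moreover have "(\<Sum>j\<in>{p+1..q+1}. massB n j) \<le> (\<Sum>j\<in>{p-1..q+1}. massB n j)"
    by (rule sum_mono_int_atLeastAtMost) (auto simp: massB_nonneg)
  moreover have "mass (Suc n) p q = (\<Sum>j\<in>{p-1..q-1}. massA n j) + (\<Sum>j\<in>{p+1..q+1}. massB n j)" by (rule mass_Suc)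
  moreover have "mass n (p - 1) (q + 1) = (\<Sum>j\<in>{p-1..q+1}. massA n j) + (\<Sum>j\<in>{p-1..q+1}. massB n j)" by (rule mass_split)
  ultimately show ?thesis by linarith
qed

lemma mass_le: "mass n p q \<le> M"
proof (induction n arbitrary: p q)
  case 0 then show ?case using initial_mass_le unfolding mass_def massA_def massB_def .
next
  case (Suc n) then show ?case using mass_Suc_le[of n p q] by (meson order_trans)
qed

lemma M_nonneg: "0 \<le> M"
proof -
  have "mass 0 1 0 \<le> M" by (rule mass_le)
  then show ?thesis unfolding mass_def by simp
qed

lemma mass_nonneg: "0 \<le> mass n p q" unfolding mass_def by (intro sum_nonneg add_nonneg_nonneg massA_nonneg massB_nonneg)

lemma incoming_pair_le: "\<tau> * ((cmod (A n (j - 1)))^2 + (cmod (B n (j + 1)))^2) \<le> M"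
proof -
  have "{j - 1..j + 1} = {j - 1, j, j + 1}" by auto
  then have "mass n (j - 1) (j + 1) = massA n (j - 1) + massB n (j + 1) + (massB n (j - 1) + massA n j + massB n j + massA n (j + 1))"
    unfolding mass_def by (simp add: algebra_simps)
  moreover have "0 \<le> massB n (j - 1) + massA n j + massB n j + massA n (j + 1)"
    by (intro add_nonneg_nonneg massA_nonneg massB_nonneg)
  ultimately have "massA n (j - 1) + massB n (j + 1) \<le> M"
    using mass_le[of n "j - 1" "j + 1"] by linarith
  then show ?thesis unfolding massA_def massB_def by (simp add: algebra_simps)
qed

lemma mass_Suc_flux:
  assumes "p + 1 \<le> q"
  shows "mass (Suc n) (p + 1) (q - 1) + massB n p + massB n (p + 1) \<le> mass n p q"
proof -
  have e1: "(\<Sum>j\<in>{p+1+1..q-1+1}. massB n j) + massB n p + massB n (p + 1) = (\<Sum>j\<in>{p..q}. massB n j)"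
  proof -
    have "{p..q} = insert p (insert (p + 1) {p+2..q})" using assms by auto
    moreover have "{p+1+1..q-1+1} = {p+2..q}" by auto
    moreover have "p \<notin> {p+2..q}" "p + 1 \<notin> {p+2..q}" "p \<noteq> p + 1" by auto
    ultimately show ?thesis by (simp only: sum.insert finite_atLeastAtMost_int insert_iff) simp
  qed
  have e2: "(\<Sum>j\<in>{p+1-1..q-1-1}. massA n j) \<le> (\<Sum>j\<in>{p..q}. massA n j)"
    by (rule sum_mono_int_atLeastAtMost) (auto simp: massA_nonneg)
  have "mass (Suc n) (p + 1) (q - 1) = (\<Sum>j\<in>{p+1-1..q-1-1}. massA n j) + (\<Sum>j\<in>{p+1+1..q-1+1}. massB n j)" by (rule mass_Suc)
  moreover have "mass n p q = (\<Sum>j\<in>{p..q}. massA n j) + (\<Sum>j\<in>{p..q}. massB n j)" by (rule mass_split)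
  ultimately show ?thesis using e1 e2 by linarith
qed

text \<open>Domain of dependence: the \<open>B\<close>-values crossed during \<open>k\<close> steps by a right-moving
  characteristic all come from a window of \<open>2k\<close> cells.\<close>

lemma massB_flux:
  "(\<Sum>i<k. massB (n + i) (p + int i)) + mass (n + k) (p + int k) (p + int k - 1) \<le> mass n p (p + 2 * int k - 1)"
proof (induction k arbitrary: n p)
  case 0 then show ?case by simp
next
  case (Suc k)
  have IH: "(\<Sum>i<k. massB (Suc n + i) (p + 1 + int i)) + mass (Suc n + k) (p + 1 + int k) (p + 1 + int k - 1) \<le> mass (Suc n) (p + 1) (p + 1 + 2 * int k - 1)"
    by (rule Suc.IH)
  have one: "mass (Suc n) (p + 1) (p + 2 * int (Suc k) - 1 - 1) + massB n p + massB n (p + 1) \<le> mass n p (p + 2 * int (Suc k) - 1)"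
    by (rule mass_Suc_flux) simp
  have s: "(\<Sum>i<Suc k. massB (n + i) (p + int i)) = massB n p + (\<Sum>i<k. massB (Suc n + i) (p + 1 + int i))"
    by (subst sum.lessThan_Suc_shift) (simp add: algebra_simps)
  have e: "p + 1 + 2 * int k - 1 = p + 2 * int (Suc k) - 1 - 1" by simp
  have e2: "Suc n + k = n + Suc k" "p + 1 + int k = p + int (Suc k)" by simp_all
  have e3: "p + 1 + int k - 1 = p + int (Suc k) - 1" by simp
  show ?case using IH one s massB_nonneg[of n "p + 1"] unfolding e e2 e3 by linarith
qed

lemma massB_flux_le: "(\<Sum>i<k. massB (n + i) (p + int i)) \<le> mass n p (p + 2 * int k - 1)"
  using massB_flux[where k=k and n=n and p=p] mass_nonneg[of "n + k" "p + int k" "p + int k - 1"] by linarith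

text \<open>\<open>charA n J\<close> follows the first component along its characteristic from cell \<open>J\<close> at
  step \<open>n\<close>; \<open>charB n J\<close> lists the values of the second component that it meets.\<close>

definition "charA n J i = A (n + i) (J + int i)"
definition "charB n J i = B (n + i) (J + int i + 2)"

lemma charA_Suc: "charA n J (Suc i) = fst (\<Phi> (charA n J i, charB n J i))"
proof -
  have "charA n J (Suc i) = A (Suc (n + i)) (J + int i + 1)" unfolding charA_def by (simp add: algebra_simps)
  also have "\<dots> = fst (\<Phi> (A (n + i) (J + int i + 1 - 1), B (n + i) (J + int i + 1 + 1)))" by (rule A_Suc)
  finally show ?thesis unfolding charA_def charB_def by (simp add: algebra_simps)
qed

lemma charB_mass: "\<tau> * (cmod (charB n J l))^2 = massB (n + l) (J + 2 + int l)"
  unfolding charB_def massB_def by (simp add: algebra_simps)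

lemma charA_step: "cmod (charA n J (Suc i) - charA n J i) \<le> K * (\<tau> * cmod (charA n J i) * (cmod (charB n J i))^2 + \<tau> * cmod (charA n J i) + \<tau> * cmod (charB n J i))"
proof -
  have "\<tau> * ((cmod (A (n + i) (J + int i + 1 - 1)))^2 + (cmod (B (n + i) (J + int i + 1 + 1)))^2) \<le> M"
    by (rule incoming_pair_le)
  then have "\<tau> * ((cmod (charA n J i))^2 + (cmod (charB n J i))^2) \<le> M" unfolding charA_def charB_def by (simp add: algebra_simps)
  from flow_fst_increment[OF this] show ?thesis unfolding charA_Suc .
qed

lemma norm_charA_Suc_le: "cmod (charA n J (Suc i)) \<le> cmod (charA n J i) * (1 + K * (\<tau> * (cmod (charB n J i))^2 + \<tau>)) + K * (\<tau> * cmod (charB n J i))"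
proof -
  have "cmod (charA n J (Suc i)) \<le> cmod (charA n J i) + cmod (charA n J (Suc i) - charA n J i)"
    by (metis add.commute diff_add_cancel norm_triangle_ineq)
  also have "\<dots> \<le> cmod (charA n J i) + K * (\<tau> * cmod (charA n J i) * (cmod (charB n J i))^2 + \<tau> * cmod (charA n J i) + \<tau> * cmod (charB n J i))"
    using charA_step by simp
  also have "\<dots> = cmod (charA n J i) * (1 + K * (\<tau> * (cmod (charB n J i))^2 + \<tau>)) + K * (\<tau> * cmod (charB n J i))"
    by (simp add: algebra_simps)
  finally show ?thesis .
qed

lemma norm_charA_le_exp: "cmod (charA n J i) \<le> exp (\<Sum>l<i. K * (\<tau> * (cmod (charB n J l))^2 + \<tau>)) * (cmod (charA n J 0) + (\<Sum>l<i. K * (\<tau> * cmod (charB n J l))))"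
  by (rule discrete_gronwall[where x="\<lambda>i. cmod (charA n J i)" and c="\<lambda>l. K * (\<tau> * (cmod (charB n J l))^2 + \<tau>)" and d="\<lambda>l. K * (\<tau> * cmod (charB n J l))", OF norm_charA_Suc_le])
     (use K_nonneg tau_pos in auto)

lemma charB_mass_sum_le: "(\<Sum>l<i. \<tau> * (cmod (charB n J l))^2) \<le> mass n (J + 2) (J + 2 + 2 * int i - 1)"
  unfolding charB_mass by (rule massB_flux_le)

definition "charB_sum n J k = (\<Sum>l<k. \<tau> * cmod (charB n J l))"
definition "charB_mass_sum n J k = (\<Sum>l<k. \<tau> * (cmod (charB n J l))^2)"
definition "growth k = exp (K * (M + real k * \<tau>))"

lemma charB_sum_nonneg: "0 \<le> charB_sum n J k" unfolding charB_sum_def using tau_pos by (simp add: sum_nonneg)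

lemma norm_charA_le:
  assumes "i \<le> k"
  shows "cmod (charA n J i) \<le> growth k * (cmod (charA n J 0) + K * charB_sum n J k)"
proof -
  have s1: "(\<Sum>l<i. K * (\<tau> * (cmod (charB n J l))^2 + \<tau>)) = K * ((\<Sum>l<i. \<tau> * (cmod (charB n J l))^2) + real i * \<tau>)"
  proof -
    have "(\<Sum>l<i. K * (\<tau> * (cmod (charB n J l))^2 + \<tau>)) = K * (\<Sum>l<i. \<tau> * (cmod (charB n J l))^2 + \<tau>)"
      by (simp add: sum_distrib_left)
    also have "(\<Sum>l<i. \<tau> * (cmod (charB n J l))^2 + \<tau>) = (\<Sum>l<i. \<tau> * (cmod (charB n J l))^2) + real i * \<tau>"
      by (simp add: sum.distrib)
    finally show ?thesis .
  qed
  have "(\<Sum>l<i. \<tau> * (cmod (charB n J l))^2) \<le> M" using charB_mass_sum_le[where i=i and n=n and J=J] mass_le order_trans by blast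
  moreover have "real i * \<tau> \<le> real k * \<tau>" using assms tau_pos by (simp add: mult_right_mono)
  ultimately have e: "exp (\<Sum>l<i. K * (\<tau> * (cmod (charB n J l))^2 + \<tau>)) \<le> growth k"
    unfolding s1 growth_def using K_nonneg by (simp add: mult_left_mono)
  have s2: "(\<Sum>l<i. K * (\<tau> * cmod (charB n J l))) = K * (\<Sum>l<i. \<tau> * cmod (charB n J l))" by (simp add: sum_distrib_left)
  have "(\<Sum>l<i. \<tau> * cmod (charB n J l)) \<le> charB_sum n J k" unfolding charB_sum_def
    by (rule sum_mono2) (use assms tau_pos in auto)
  then have s3: "cmod (charA n J 0) + (\<Sum>l<i. K * (\<tau> * cmod (charB n J l))) \<le> cmod (charA n J 0) + K * charB_sum n J k"
    unfolding s2 using K_nonneg by (simp add: mult_left_mono)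
  have nn: "0 \<le> cmod (charA n J 0) + (\<Sum>l<i. K * (\<tau> * cmod (charB n J l)))" using K_nonneg tau_pos by (simp add: sum_nonneg)
  have G0: "0 \<le> growth k" unfolding growth_def by simp
  show ?thesis using norm_charA_le_exp[of n J i] mult_mono[OF e s3 G0 nn] by linarith
qed

lemma charA_increment_le:
  "cmod (charA n J k - charA n J 0) \<le> K * (growth k * (cmod (charA n J 0) + K * charB_sum n J k)) * (charB_mass_sum n J k + real k * \<tau>) + K * charB_sum n J k"
proof -
  define X where "X = growth k * (cmod (charA n J 0) + K * charB_sum n J k)"
  have tele: "cmod (charA n J i - charA n J 0) \<le> (\<Sum>l<i. cmod (charA n J (Suc l) - charA n J l))" for i
  proof (induction i)
    case 0 then show ?case by simp
  next
    case (Suc i)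
    have "cmod (charA n J (Suc i) - charA n J 0) \<le> cmod (charA n J (Suc i) - charA n J i) + cmod (charA n J i - charA n J 0)"
      by (metis diff_add_cancel norm_triangle_ineq add_diff_eq)
    then show ?case using Suc.IH by simp
  qed
  have "(\<Sum>l<k. cmod (charA n J (Suc l) - charA n J l)) \<le> (\<Sum>l<k. K * (X * (\<tau> * (cmod (charB n J l))^2 + \<tau>)) + K * (\<tau> * cmod (charB n J l)))"
  proof (rule sum_mono)
    fix l assume l: "l \<in> {..<k}"
    have xl: "cmod (charA n J l) \<le> X" unfolding X_def by (rule norm_charA_le) (use l in auto)
    have "K * (\<tau> * cmod (charA n J l) * (cmod (charB n J l))^2 + \<tau> * cmod (charA n J l) + \<tau> * cmod (charB n J l))
        = K * (cmod (charA n J l) * (\<tau> * (cmod (charB n J l))^2 + \<tau>)) + K * (\<tau> * cmod (charB n J l))"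
      by (simp add: algebra_simps)
    also have "\<dots> \<le> K * (X * (\<tau> * (cmod (charB n J l))^2 + \<tau>)) + K * (\<tau> * cmod (charB n J l))"
      using xl K_nonneg tau_pos by (intro add_right_mono mult_left_mono mult_right_mono) auto
    finally show "cmod (charA n J (Suc l) - charA n J l) \<le> K * (X * (\<tau> * (cmod (charB n J l))^2 + \<tau>)) + K * (\<tau> * cmod (charB n J l))"
      using charA_step[of n J l] by linarith
  qed
  also have "\<dots> = K * X * (charB_mass_sum n J k + real k * \<tau>) + K * charB_sum n J k"
    unfolding charB_mass_sum_def charB_sum_def by (simp add: sum.distrib sum_distrib_left algebra_simps)
  finally show ?thesis using tele[of k] unfolding X_def by linarith
qed

lemma charB_sum_power2_le: "(charB_sum n J k)^2 \<le> real k * \<tau> * (\<Sum>l<k. massB (n + l) (J + 2 + int l))"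
proof -
  have "(charB_sum n J k)^2 \<le> (\<Sum>l<k. (\<tau> * cmod (charB n J l))^2) * card {..<k}"
    unfolding charB_sum_def by (rule sum_squared_le_sum_of_squares)
  also have "(\<Sum>l<k. (\<tau> * cmod (charB n J l))^2) = \<tau> * (\<Sum>l<k. massB (n + l) (J + 2 + int l))"
    unfolding charB_mass[symmetric] by (simp add: sum_distrib_left power_mult_distrib power2_eq_square mult_ac)
  finally show ?thesis by (simp add: mult_ac)
qed

lemma sum_charB_sum_power2_le: "(\<Sum>J\<in>{p..q}. \<tau> * (charB_sum n J k)^2) \<le> (real k * \<tau>)^2 * M"
proof -
  have "(\<Sum>J\<in>{p..q}. \<tau> * (charB_sum n J k)^2) \<le> (\<Sum>J\<in>{p..q}. \<tau> * (real k * \<tau> * (\<Sum>l<k. massB (n + l) (J + 2 + int l))))"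
    by (rule sum_mono) (use tau_pos charB_sum_power2_le in \<open>simp add: mult_left_mono\<close>)
  also have "\<dots> = real k * \<tau> * \<tau> * (\<Sum>l<k. (\<Sum>J\<in>{p..q}. massB (n + l) (J + 2 + int l)))"
    by (simp add: sum_distrib_left sum.swap[of _ "{p..q}"] mult_ac)
  also have "\<dots> \<le> real k * \<tau> * \<tau> * (\<Sum>l<k. M)"
  proof -
    have "(\<Sum>J\<in>{p..q}. massB (n + l) (J + 2 + int l)) \<le> M" for l
    proof -
      have "(\<Sum>J\<in>{p..q}. massB (n + l) (J + (2 + int l))) = (\<Sum>J\<in>{p + (2 + int l)..q + (2 + int l)}. massB (n + l) J)"
        by (rule sum_int_shift_reindex)
      also have "\<dots> \<le> mass (n + l) (p + (2 + int l)) (q + (2 + int l))" unfolding mass_def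
        by (rule sum_mono) (simp add: massA_nonneg)
      also have "\<dots> \<le> M" by (rule mass_le)
      finally show ?thesis by (simp add: add.assoc)
    qed
    then show ?thesis using tau_pos by (intro mult_left_mono sum_mono) auto
  qed
  also have "\<dots> = (real k * \<tau>)^2 * M" by (simp add: power2_eq_square)
  finally show ?thesis .
qed

lemma shift_diff_le:
  assumes mu: "charB_mass_sum n J k \<le> \<mu>"
  shows "cmod (A (n + k) (J + int k) - A n J) \<le> (K * growth k * (\<mu> + real k * \<tau>)) * cmod (A n J) + (K * K * growth k * (\<mu> + real k * \<tau>) + K) * charB_sum n J k"
proof -
  have G0: "0 \<le> growth k" unfolding growth_def by simp
  have "cmod (charA n J k - charA n J 0) \<le> K * (growth k * (cmod (charA n J 0) + K * charB_sum n J k)) * (charB_mass_sum n J k + real k * \<tau>) + K * charB_sum n J k"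
    by (rule charA_increment_le)
  also have "\<dots> \<le> K * (growth k * (cmod (charA n J 0) + K * charB_sum n J k)) * (\<mu> + real k * \<tau>) + K * charB_sum n J k"
    using mu K_nonneg G0 charB_sum_nonneg[of n J k] by (intro add_right_mono mult_left_mono) (auto intro!: mult_nonneg_nonneg add_nonneg_nonneg)
  also have "\<dots> = (K * growth k * (\<mu> + real k * \<tau>)) * cmod (charA n J 0) + (K * K * growth k * (\<mu> + real k * \<tau>) + K) * charB_sum n J k"
    by (simp add: algebra_simps)
  finally show ?thesis unfolding charA_def by simp
qed

lemma shift_diff_sum_le:
  assumes mu: "\<And>J. mass n (J + 2) (J + 2 * int k + 1) \<le> \<mu>"
  shows "(\<Sum>J\<in>{p..q}. \<tau> * (cmod (A (n + k) (J + int k) - A n J))^2)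
      \<le> 2 * (K * growth k * (\<mu> + real k * \<tau>))^2 * M + 2 * (K * K * growth k * (\<mu> + real k * \<tau>) + K)^2 * ((real k * \<tau>)^2 * M)"
proof -
  define c1 where "c1 = K * growth k * (\<mu> + real k * \<tau>)"
  define c2 where "c2 = K * K * growth k * (\<mu> + real k * \<tau>) + K"
  have pt: "\<tau> * (cmod (A (n + k) (J + int k) - A n J))^2 \<le> 2 * c1^2 * massA n J + 2 * c2^2 * (\<tau> * (charB_sum n J k)^2)" for J
  proof -
    have "charB_mass_sum n J k \<le> \<mu>"
      using charB_mass_sum_le[where i=k and n=n and J=J] mu[of J] unfolding charB_mass_sum_def by (simp add: algebra_simps)
    from shift_diff_le[OF this] have d: "cmod (A (n + k) (J + int k) - A n J) \<le> c1 * cmod (A n J) + c2 * charB_sum n J k"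
      unfolding c1_def c2_def .
    have "(cmod (A (n + k) (J + int k) - A n J))^2 \<le> (c1 * cmod (A n J) + c2 * charB_sum n J k)^2"
      by (rule power_mono[OF d]) simp
    also have "\<dots> \<le> 2 * (c1 * cmod (A n J))^2 + 2 * (c2 * charB_sum n J k)^2" by (rule power2_add_le)
    finally have "\<tau> * (cmod (A (n + k) (J + int k) - A n J))^2 \<le> \<tau> * (2 * (c1 * cmod (A n J))^2 + 2 * (c2 * charB_sum n J k)^2)"
      using tau_pos by (simp add: mult_left_mono)
    also have "\<dots> = 2 * c1^2 * massA n J + 2 * c2^2 * (\<tau> * (charB_sum n J k)^2)"
      unfolding massA_def by (simp add: power_mult_distrib algebra_simps)
    finally show ?thesis .
  qed
  have s1: "(\<Sum>J\<in>{p..q}. massA n J) \<le> M"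
  proof -
    have "(\<Sum>J\<in>{p..q}. massA n J) \<le> mass n p q" unfolding mass_def by (rule sum_mono) (simp add: massB_nonneg)
    then show ?thesis using mass_le[of n p q] by linarith
  qed
  have s2: "(\<Sum>J\<in>{p..q}. \<tau> * (charB_sum n J k)^2) \<le> (real k * \<tau>)^2 * M"
    by (rule sum_charB_sum_power2_le)
  have "(\<Sum>J\<in>{p..q}. \<tau> * (cmod (A (n + k) (J + int k) - A n J))^2) \<le> (\<Sum>J\<in>{p..q}. 2 * c1^2 * massA n J + 2 * c2^2 * (\<tau> * (charB_sum n J k)^2))"
    by (rule sum_mono) (rule pt)
  also have "\<dots> = 2 * c1^2 * (\<Sum>J\<in>{p..q}. massA n J) + 2 * c2^2 * (\<Sum>J\<in>{p..q}. \<tau> * (charB_sum n J k)^2)"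
    by (simp add: sum.distrib sum_distrib_left)
  also have "\<dots> \<le> 2 * c1^2 * M + 2 * c2^2 * ((real k * \<tau>)^2 * M)"
    using s1 s2 by (intro add_mono mult_left_mono) auto
  finally show ?thesis unfolding c1_def c2_def .
qed

lemma window_sum_massA_le:
  assumes hb: "\<And>i p. i < n \<Longrightarrow> window_sum (massB i) p L \<le> g i" and ha: "\<And>p. window_sum (massA 0) p L \<le> \<eta>"
  shows "window_sum (massA n) p L \<le> 2 * (growth n)^2 * (\<eta> + K^2 * (real n * \<tau>) * (\<Sum>i<n. \<tau> * g i))"
proof -
  define G where "G = growth n"
  have pt: "massA n j \<le> 2 * G^2 * massA 0 (j - int n) + 2 * G^2 * K^2 * (real n * \<tau>) * (\<tau> * (\<Sum>l<n. massB l (j - int n + 2 + int l)))" for j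
  proof -
    have e: "A n j = charA 0 (j - int n) n" unfolding charA_def by simp
    have b: "cmod (A n j) \<le> G * (cmod (A 0 (j - int n)) + K * charB_sum 0 (j - int n) n)"
      unfolding e G_def using norm_charA_le[of n n 0 "j - int n"] by (simp add: charA_def)
    have "(cmod (A n j))^2 \<le> (G * (cmod (A 0 (j - int n)) + K * charB_sum 0 (j - int n) n))^2"
      by (rule power_mono[OF b]) simp
    also have "\<dots> = (G * cmod (A 0 (j - int n)) + G * K * charB_sum 0 (j - int n) n)^2" by (simp add: algebra_simps)
    also have "\<dots> \<le> 2 * (G * cmod (A 0 (j - int n)))^2 + 2 * (G * K * charB_sum 0 (j - int n) n)^2" by (rule power2_add_le)
    also have "\<dots> = 2 * G^2 * (cmod (A 0 (j - int n)))^2 + 2 * G^2 * K^2 * (charB_sum 0 (j - int n) n)^2"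
      by (simp add: power_mult_distrib)
    also have "\<dots> \<le> 2 * G^2 * (cmod (A 0 (j - int n)))^2 + 2 * G^2 * K^2 * (real n * \<tau> * (\<Sum>l<n. massB (0 + l) (j - int n + 2 + int l)))"
      using charB_sum_power2_le[of 0 "j - int n" n] by (intro add_left_mono mult_left_mono) auto
    finally have "\<tau> * (cmod (A n j))^2 \<le> \<tau> * (2 * G^2 * (cmod (A 0 (j - int n)))^2 + 2 * G^2 * K^2 * (real n * \<tau> * (\<Sum>l<n. massB l (j - int n + 2 + int l))))"
      using tau_pos by (simp add: mult_left_mono)
    then show ?thesis unfolding massA_def by (simp add: algebra_simps)
  qed
  have "window_sum (massA n) p L \<le> (\<Sum>j\<in>{p..p+L-1}. 2 * G^2 * massA 0 (j - int n) + 2 * G^2 * K^2 * (real n * \<tau>) * (\<tau> * (\<Sum>l<n. massB l (j - int n + 2 + int l))))"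
    unfolding window_sum_def by (rule sum_mono) (rule pt)
  also have "\<dots> = 2 * G^2 * (\<Sum>j\<in>{p..p+L-1}. massA 0 (j + (- int n))) + 2 * G^2 * K^2 * (real n * \<tau>) * (\<tau> * (\<Sum>j\<in>{p..p+L-1}. (\<Sum>l<n. massB l (j + (- int n + 2 + int l)))))"
    by (simp add: sum.distrib sum_distrib_left algebra_simps)
  also have "(\<Sum>j\<in>{p..p+L-1}. (\<Sum>l<n. massB l (j + (- int n + 2 + int l)))) = (\<Sum>l<n. (\<Sum>j\<in>{p..p+L-1}. massB l (j + (- int n + 2 + int l))))"
    by (rule sum.swap)
  also have "(\<Sum>j\<in>{p..p+L-1}. massA 0 (j + (- int n))) = window_sum (massA 0) (p - int n) L"
    unfolding sum_int_shift_reindex window_sum_def by (simp add: algebra_simps)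
  also have "(\<Sum>l<n. (\<Sum>j\<in>{p..p+L-1}. massB l (j + (- int n + 2 + int l)))) = (\<Sum>l<n. window_sum (massB l) (p - int n + 2 + int l) L)"
    unfolding sum_int_shift_reindex window_sum_def by (simp add: algebra_simps)
  also have "2 * G^2 * window_sum (massA 0) (p - int n) L + 2 * G^2 * K^2 * (real n * \<tau>) * (\<tau> * (\<Sum>l<n. window_sum (massB l) (p - int n + 2 + int l) L))
      \<le> 2 * G^2 * \<eta> + 2 * G^2 * K^2 * (real n * \<tau>) * (\<tau> * (\<Sum>l<n. g l))"
  proof (intro add_mono mult_left_mono)
    show "window_sum (massA 0) (p - int n) L \<le> \<eta>" by (rule ha)
    show "(\<Sum>l<n. window_sum (massB l) (p - int n + 2 + int l) L) \<le> (\<Sum>l<n. g l)" by (rule sum_mono) (use hb in auto)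
  qed (use tau_pos in auto)
  also have "\<dots> = 2 * (growth n)^2 * (\<eta> + K^2 * (real n * \<tau>) * (\<Sum>i<n. \<tau> * g i))"
  proof -
    have "(\<Sum>i<n. \<tau> * g i) = \<tau> * (\<Sum>i<n. g i)" by (simp add: sum_distrib_left)
    then show ?thesis unfolding G_def by (simp add: algebra_simps)
  qed
  finally show ?thesis .
qed

lemma splitting_lattice_reflect: "splitting_lattice \<Phi> \<tau> K M (\<lambda>n j. B n (- j)) (\<lambda>n j. A n (- j))"
proof (unfold_locales)
  show "0 < \<tau>" by (rule tau_pos)
  show "0 \<le> K" by (rule K_nonneg)
  show "norm (\<Phi> p) = norm p" for p by (rule norm_flow)
  show "\<Phi> (snd p, fst p) = (snd (\<Phi> p), fst (\<Phi> p))" for p by (rule flow_swap)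
  show "\<tau> * ((cmod a)^2 + (cmod b)^2) \<le> M \<Longrightarrow> cmod (fst (\<Phi> (a, b)) - a) \<le> K * (\<tau> * cmod a * (cmod b)^2 + \<tau> * cmod a + \<tau> * cmod b)" for a b
    by (rule flow_fst_increment)
  fix n :: nat and j :: int
  have e: "- (j - 1) = - j + 1" "- (j + 1) = - j - 1" by simp_all
  have s: "\<Phi> (B n (- (j - 1)), A n (- (j + 1))) = (snd (\<Phi> (A n (- j - 1), B n (- j + 1))), fst (\<Phi> (A n (- j - 1), B n (- j + 1))))"
    using flow_swap[of "(A n (- j - 1), B n (- j + 1))"] unfolding e by (simp only: fst_conv snd_conv)
  show "B (Suc n) (- j) = fst (\<Phi> (B n (- (j - 1)), A n (- (j + 1))))" unfolding s B_Suc by (simp add: algebra_simps)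
  show "A (Suc n) (- j) = snd (\<Phi> (B n (- (j - 1)), A n (- (j + 1))))" unfolding s A_Suc by (simp add: algebra_simps)
next
  fix p q :: int
  have "(\<Sum>j\<in>{p..q}. \<tau> * (cmod (B 0 (- j)))^2 + \<tau> * (cmod (A 0 (- j)))^2) = (\<Sum>j\<in>{-q..-p}. \<tau> * (cmod (B 0 j))^2 + \<tau> * (cmod (A 0 j))^2)"
    by (rule sum_int_uminus_reindex[where f = "\<lambda>j. \<tau> * (cmod (B 0 j))^2 + \<tau> * (cmod (A 0 j))^2"])
  also have "\<dots> \<le> M" using initial_mass_le[of "-q" "-p"] by (simp add: add.commute)
  finally show "(\<Sum>j\<in>{p..q}. \<tau> * (cmod (B 0 (- j)))^2 + \<tau> * (cmod (A 0 (- j)))^2) \<le> M" .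
qed

definition "growth_bound T = exp (K * (M + T))"

lemma growth_le_growth_bound: "real n * \<tau> \<le> T \<Longrightarrow> growth n \<le> growth_bound T"
  unfolding growth_def growth_bound_def using K_nonneg by (simp add: mult_left_mono)

text \<open>The \<open>A\<close>-mass of a window is controlled by its initial mass plus the \<open>B\<close>-mass that
  crossed it. The same holds for \<open>B\<close> on the reflected lattice, and induction over time gives
  geometric growth.\<close>

lemma windows_le_geometric:
  assumes T: "0 \<le> T" and eta: "0 \<le> \<eta>" and ia: "\<And>p. window_sum (massA 0) p L \<le> \<eta>" and ib: "\<And>p. window_sum (massB 0) p L \<le> \<eta>"
    and n: "real n * \<tau> \<le> T"
  shows "window_sum (massA n) p L \<le> 2 * (growth_bound T)^2 * \<eta> * (1 + 2 * (growth_bound T)^2 * K^2 * T * \<tau>)^n \<and> window_sum (massB n) p L \<le> 2 * (growth_bound T)^2 * \<eta> * (1 + 2 * (growth_bound T)^2 * K^2 * T * \<tau>)^n"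
  using n
proof (induction n arbitrary: p rule: less_induct)
  case (less n)
  interpret R: splitting_lattice \<Phi> \<tau> K M "\<lambda>n j. B n (- j)" "\<lambda>n j. A n (- j)" by (rule splitting_lattice_reflect)
  define C0 where "C0 = 2 * (growth_bound T)^2"
  define D where "D = C0 * K^2 * T"
  define g where "g i = C0 * \<eta> * (1 + D * \<tau>)^i" for i
  have C00: "0 \<le> C0" unfolding C0_def by simp
  have D0: "0 \<le> D" unfolding D_def using C00 T by simp
  have reflect_mass: "R.massA i = (\<lambda>j. massB i (- j))" "R.massB i = (\<lambda>j. massA i (- j))" for i
    by (simp_all add: fun_eq_iff R.massA_def R.massB_def massA_def massB_def)
  have reflect_windowA: "window_sum (R.massA i) q L = window_sum (massB i) (- q - L + 1) L"
    and reflect_windowB: "window_sum (R.massB i) q L = window_sum (massA i) (- q - L + 1) L" for i q L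
    unfolding reflect_mass window_sum_reflect by simp_all
  have IHa: "window_sum (massA i) q L \<le> g i" and IHb: "window_sum (massB i) q L \<le> g i" if "i < n" for i q
  proof -
    have "real i * \<tau> \<le> T" using that less.prems tau_pos by (meson less_imp_le_nat mult_right_mono of_nat_le_iff order_trans less_imp_le)
    then show "window_sum (massA i) q L \<le> g i" "window_sum (massB i) q L \<le> g i" using less.IH[OF that] unfolding g_def C0_def D_def by auto
  qed
  have Gn: "(growth n)^2 \<le> (growth_bound T)^2"
    using growth_le_growth_bound[OF less.prems] by (intro power_mono) (auto simp: growth_def)
  have key: "2 * (growth n)^2 * (\<eta> + K^2 * (real n * \<tau>) * (\<Sum>i<n. \<tau> * g i)) \<le> g n"
  proof -
    have sg: "0 \<le> (\<Sum>i<n. \<tau> * g i)" unfolding g_def using tau_pos C00 eta D0 by (intro sum_nonneg) auto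
    have "2 * (growth n)^2 * (\<eta> + K^2 * (real n * \<tau>) * (\<Sum>i<n. \<tau> * g i)) \<le> C0 * (\<eta> + K^2 * T * (\<Sum>i<n. \<tau> * g i))"
      unfolding C0_def using Gn less.prems sg eta tau_pos T
      by (intro mult_mono add_left_mono mult_right_mono) (auto intro!: add_nonneg_nonneg mult_nonneg_nonneg)
    also have "\<dots> = C0 * \<eta> + C0 * \<eta> * ((D * \<tau>) * (\<Sum>i<n. (1 + D * \<tau>)^i))"
      unfolding g_def D_def by (simp add: sum_distrib_left algebra_simps)
    also have "\<dots> = g n"
      using power_diff_1_eq[of "1 + D * \<tau>" n] unfolding g_def by (simp add: algebra_simps)
    finally show ?thesis .
  qed
  have "window_sum (massA n) p L \<le> g n"
    using window_sum_massA_le[of n L g \<eta> p] IHb ia key by (meson order_trans)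
  moreover have "window_sum (massB n) p L \<le> g n"
  proof -
    have "window_sum (R.massA n) (- (p + L - 1)) L \<le> 2 * (R.growth n)^2 * (\<eta> + K^2 * (real n * \<tau>) * (\<Sum>i<n. \<tau> * g i))"
    proof (rule R.window_sum_massA_le)
      fix i q assume "i < n"
      show "window_sum (R.massB i) q L \<le> g i" using IHa[OF \<open>i < n\<close>, of "- q - L + 1"] reflect_windowB[of i q] by simp
    next
      fix q show "window_sum (R.massA 0) q L \<le> \<eta>" using ib[of "- q - L + 1"] reflect_windowA[of 0 q] by simp
    qed
    moreover have "R.growth n = growth n" unfolding R.growth_def growth_def ..
    ultimately show ?thesis using reflect_windowA[of n "- (p + L - 1)"] key by simp
  qed
  ultimately show ?case unfolding g_def C0_def D_def by simp
qed

lemma mass_nonconcentration: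
  assumes T: "0 \<le> T" and eta: "0 \<le> \<eta>" and ia: "\<And>p. window_sum (massA 0) p L \<le> \<eta>" and ib: "\<And>p. window_sum (massB 0) p L \<le> \<eta>"
    and n: "real n * \<tau> \<le> T"
  shows "mass n p (p + L - 1) \<le> 4 * (growth_bound T)^2 * \<eta> * exp (2 * (growth_bound T)^2 * K^2 * T * T)"
proof -
  define x where "x = 2 * (growth_bound T)^2 * K^2 * T * \<tau>"
  have x0: "0 \<le> x" unfolding x_def using T tau_pos by simp
  have "(1 + x)^n \<le> (exp x)^n" using x0 by (intro power_mono) (auto simp: exp_ge_add_one_self)
  also have "\<dots> = exp (real n * x)" by (simp add: exp_of_nat_mult)
  also have "\<dots> \<le> exp (2 * (growth_bound T)^2 * K^2 * T * T)"
  proof -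
    have "real n * x = 2 * (growth_bound T)^2 * K^2 * T * (real n * \<tau>)" unfolding x_def by (simp add: algebra_simps)
    also have "\<dots> \<le> 2 * (growth_bound T)^2 * K^2 * T * T" using n T by (intro mult_left_mono) auto
    finally show ?thesis by simp
  qed
  finally have px: "(1 + x)^n \<le> exp (2 * (growth_bound T)^2 * K^2 * T * T)" .
  have c0: "0 \<le> 2 * (growth_bound T)^2 * \<eta>" using eta by simp
  have "window_sum (massA n) p L \<le> 2 * (growth_bound T)^2 * \<eta> * exp (2 * (growth_bound T)^2 * K^2 * T * T)" "window_sum (massB n) p L \<le> 2 * (growth_bound T)^2 * \<eta> * exp (2 * (growth_bound T)^2 * K^2 * T * T)"
    using windows_le_geometric[OF T eta ia ib n, of p] mult_left_mono[OF px c0] unfolding x_def by auto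
  then show ?thesis unfolding mass_split window_sum_def window_sum_def by simp
qed

lemma shift_diffA_sum_le:
  assumes T: "0 \<le> T" and eta: "0 \<le> \<eta>"
    and ia: "\<And>p. window_sum (massA 0) p (2 * int k) \<le> \<eta>" and ib: "\<And>p. window_sum (massB 0) p (2 * int k) \<le> \<eta>"
    and n: "real n * \<tau> \<le> T" and k: "real k * \<tau> \<le> T"
  shows "(\<Sum>J\<in>{p..q}. \<tau> * (cmod (A (n + k) (J + int k) - A n J))^2) \<le> shift_bound K M T \<eta> (real k * \<tau>)"
proof -
  define G where "G = growth_bound T"
  define \<mu> where "\<mu> = 4 * G^2 * \<eta> * exp (2 * G^2 * K^2 * T * T)"
  have mu: "mass n (J + 2) (J + 2 * int k + 1) \<le> \<mu>" for J
    using mass_nonconcentration[OF T eta ia ib n, of "J + 2"] unfolding \<mu>_def G_def by (simp add: algebra_simps)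
  have mu0: "0 \<le> \<mu>" unfolding \<mu>_def using eta by simp
  have G0: "0 \<le> growth k" unfolding growth_def by simp
  have GG: "growth k \<le> G" unfolding G_def by (rule growth_le_growth_bound[OF k])
  have x0: "0 \<le> real k * \<tau>" using tau_pos by simp
  have "(\<Sum>J\<in>{p..q}. \<tau> * (cmod (A (n + k) (J + int k) - A n J))^2)
      \<le> 2 * (K * growth k * (\<mu> + real k * \<tau>))^2 * M + 2 * (K * K * growth k * (\<mu> + real k * \<tau>) + K)^2 * ((real k * \<tau>)^2 * M)"
    by (rule shift_diff_sum_le[OF mu])
  also have "\<dots> \<le> 2 * (K * G * (\<mu> + real k * \<tau>))^2 * M + 2 * (K * K * G * (\<mu> + real k * \<tau>) + K)^2 * ((real k * \<tau>)^2 * M)"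
    using GG G0 K_nonneg mu0 x0 M_nonneg
    by (intro add_mono mult_right_mono mult_left_mono power_mono add_right_mono) (auto intro!: mult_nonneg_nonneg add_nonneg_nonneg)
  also have "\<dots> = shift_bound K M T \<eta> (real k * \<tau>)"
    unfolding shift_bound_def Let_def G_def growth_bound_def \<mu>_def by simp
  finally show ?thesis .
qed

lemma shift_diffB_sum_le:
  assumes T: "0 \<le> T" and eta: "0 \<le> \<eta>"
    and ia: "\<And>p. window_sum (massA 0) p (2 * int k) \<le> \<eta>" and ib: "\<And>p. window_sum (massB 0) p (2 * int k) \<le> \<eta>"
    and n: "real n * \<tau> \<le> T" and k: "real k * \<tau> \<le> T"
  shows "(\<Sum>J\<in>{p..q}. \<tau> * (cmod (B (n + k) (J - int k) - B n J))^2) \<le> shift_bound K M T \<eta> (real k * \<tau>)"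
proof -
  interpret R: splitting_lattice \<Phi> \<tau> K M "\<lambda>n j. B n (- j)" "\<lambda>n j. A n (- j)" by (rule splitting_lattice_reflect)
  have reflect_mass: "R.massA i = (\<lambda>j. massB i (- j))" "R.massB i = (\<lambda>j. massA i (- j))" for i
    by (simp_all add: fun_eq_iff R.massA_def R.massB_def massA_def massB_def)
  have reflect_windowA: "window_sum (R.massA i) q L = window_sum (massB i) (- q - L + 1) L"
    and reflect_windowB: "window_sum (R.massB i) q L = window_sum (massA i) (- q - L + 1) L" for i q L
    unfolding reflect_mass window_sum_reflect by simp_all
  have "(\<Sum>J\<in>{-q..-p}. \<tau> * (cmod (B (n + k) (- J - int k) - B n (- J)))^2) \<le> shift_bound K M T \<eta> (real k * \<tau>)"
    using R.shift_diffA_sum_le[OF T eta _ _ n k, of "-q" "-p"] ib ia unfolding reflect_windowA reflect_windowB by (simp add: algebra_simps)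
  also have "(\<Sum>J\<in>{-q..-p}. \<tau> * (cmod (B (n + k) (- J - int k) - B n (- J)))^2) = (\<Sum>J\<in>{p..q}. \<tau> * (cmod (B (n + k) (J - int k) - B n J))^2)"
    using sum_int_uminus_reindex[where f="\<lambda>J. \<tau> * (cmod (B (n + k) (- J - int k) - B n (- J)))^2" and p=p and q=q] by simp
  finally show ?thesis .
qed

end

section \<open>Step functions on the real line\<close>

lemma mem_cell_iff_floor:
  assumes tau: "0 < (\<tau>::real)"
  shows "x \<in> {c + of_int J * \<tau> ..< c + (of_int J + 1) * \<tau>} \<longleftrightarrow> \<lfloor>(x - c) / \<tau>\<rfloor> = J"
proof -
  have "x \<in> {c + of_int J * \<tau> ..< c + (of_int J + 1) * \<tau>} \<longleftrightarrow> of_int J \<le> (x - c) / \<tau> \<and> (x - c) / \<tau> < of_int J + 1"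
    using tau by (auto simp: pos_le_divide_eq pos_divide_less_eq algebra_simps)
  also have "\<dots> \<longleftrightarrow> \<lfloor>(x - c) / \<tau>\<rfloor> = J" by (simp add: floor_eq_iff)
  finally show ?thesis .
qed

lemma mem_cells_iff_floor:
  assumes tau: "0 < (\<tau>::real)"
  shows "x \<in> {c + of_int p * \<tau> ..< c + (of_int q + 1) * \<tau>} \<longleftrightarrow> \<lfloor>(x - c) / \<tau>\<rfloor> \<in> {p..q}"
proof -
  have "x \<in> {c + of_int p * \<tau> ..< c + (of_int q + 1) * \<tau>} \<longleftrightarrow> of_int p \<le> (x - c) / \<tau> \<and> (x - c) / \<tau> < of_int q + 1"
    using tau by (auto simp: pos_le_divide_eq pos_divide_less_eq algebra_simps)
  also have "\<dots> \<longleftrightarrow> \<lfloor>(x - c) / \<tau>\<rfloor> \<in> {p..q}" by (auto simp: le_floor_iff floor_le_iff)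
  finally show ?thesis .
qed

lemma indicator_cell:
  assumes tau: "0 < (\<tau>::real)"
  shows "(indicator {c + of_int J * \<tau> ..< c + (of_int J + 1) * \<tau>} x :: ennreal) = (if \<lfloor>(x - c) / \<tau>\<rfloor> = J then 1 else 0)"
  using mem_cell_iff_floor[OF tau, of x c J] by (simp add: indicator_def)

lemma indicator_cells:
  assumes tau: "0 < (\<tau>::real)"
  shows "(indicator {c + of_int p * \<tau> ..< c + (of_int q + 1) * \<tau>} x :: ennreal) = (if \<lfloor>(x - c) / \<tau>\<rfloor> \<in> {p..q} then 1 else 0)"
  using mem_cells_iff_floor[OF tau, of x c p q] by (simp add: indicator_def)

lemma nn_integral_step_cells:
  fixes f :: "int \<Rightarrow> ennreal"
  assumes tau: "0 < \<tau>"
  shows "(\<integral>\<^sup>+ x. f \<lfloor>(x - c) / \<tau>\<rfloor> * indicator {c + of_int p * \<tau> ..< c + (of_int q + 1) * \<tau>} x \<partial>lborel)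
       = (\<Sum>J\<in>{p..q}. f J) * ennreal \<tau>"
proof -
  have pw: "f \<lfloor>(x - c) / \<tau>\<rfloor> * indicator {c + of_int p * \<tau> ..< c + (of_int q + 1) * \<tau>} x
      = (\<Sum>J\<in>{p..q}. f J * indicator {c + of_int J * \<tau> ..< c + (of_int J + 1) * \<tau>} x)" for x
  proof -
    have "(\<Sum>J\<in>{p..q}. f J * indicator {c + of_int J * \<tau> ..< c + (of_int J + 1) * \<tau>} x)
        = (\<Sum>J\<in>{p..q}. if J = \<lfloor>(x - c) / \<tau>\<rfloor> then f J else 0)"
      by (rule sum.cong) (simp_all only: indicator_cell[OF tau], auto)
    also have "\<dots> = (if \<lfloor>(x - c) / \<tau>\<rfloor> \<in> {p..q} then f \<lfloor>(x - c) / \<tau>\<rfloor> else 0)"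
      by (simp add: sum.delta')
    finally show ?thesis by (simp only: indicator_cells[OF tau], auto)
  qed
  have "(\<integral>\<^sup>+ x. f \<lfloor>(x - c) / \<tau>\<rfloor> * indicator {c + of_int p * \<tau> ..< c + (of_int q + 1) * \<tau>} x \<partial>lborel)
      = (\<integral>\<^sup>+ x. (\<Sum>J\<in>{p..q}. f J * indicator {c + of_int J * \<tau> ..< c + (of_int J + 1) * \<tau>} x) \<partial>lborel)"
    unfolding pw ..
  also have "\<dots> = (\<Sum>J\<in>{p..q}. (\<integral>\<^sup>+ x. f J * indicator {c + of_int J * \<tau> ..< c + (of_int J + 1) * \<tau>} x \<partial>lborel))"
    by (rule nn_integral_sum) auto
  also have "\<dots> = (\<Sum>J\<in>{p..q}. f J * ennreal \<tau>)"
    using tau by (intro sum.cong refl) (simp add: nn_integral_cmult_indicator algebra_simps)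
  finally show ?thesis by (simp add: sum_distrib_right)
qed

lemma nn_integral_step_le:
  fixes f :: "int \<Rightarrow> ennreal"
  assumes tau: "0 < \<tau>" and S: "\<And>p q. (\<Sum>J\<in>{p..q}. f J) \<le> S"
  shows "(\<integral>\<^sup>+ x. f \<lfloor>(x - c) / \<tau>\<rfloor> \<partial>lborel) \<le> S * ennreal \<tau>"
proof -
  define g where "g N x = f \<lfloor>(x - c) / \<tau>\<rfloor> * indicator {c + of_int (- int N) * \<tau> ..< c + (of_int (int N) + 1) * \<tau>} x" for N x
  have inc: "incseq g"
  proof (rule incseq_SucI, rule le_funI)
    fix N x
    have "{c + of_int (- int N) * \<tau> ..< c + (of_int (int N) + 1) * \<tau>} \<subseteq> {c + of_int (- int (Suc N)) * \<tau> ..< c + (of_int (int (Suc N)) + 1) * \<tau>}"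
      using tau by (auto simp: algebra_simps)
    then show "g N x \<le> g (Suc N) x" unfolding g_def
      by (intro mult_left_mono) (auto simp: indicator_def)
  qed
  have lim: "(SUP N. g N x) = f \<lfloor>(x - c) / \<tau>\<rfloor>" for x
  proof -
    obtain N where N: "\<bar>\<lfloor>(x - c) / \<tau>\<rfloor>\<bar> \<le> int N" by (metis nat_int_comparison(3) abs_ge_zero int_nat_eq order_refl)
    have "g N' x = f \<lfloor>(x - c) / \<tau>\<rfloor>" if "N' \<ge> N" for N'
    proof -
      have "\<lfloor>(x - c) / \<tau>\<rfloor> \<in> {- int N'..int N'}" using N that by auto
      then show ?thesis unfolding g_def using mem_cells_iff_floor[OF tau, of x c "- int N'" "int N'"] by simp
    qed
    moreover have "g N' x \<le> f \<lfloor>(x - c) / \<tau>\<rfloor>" for N'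
      unfolding g_def by (simp add: indicator_def)
    ultimately show ?thesis
      by (intro antisym SUP_least) (auto intro!: SUP_upper2[where i="N"] simp: )
  qed
  have meas: "g N \<in> borel_measurable lborel" for N
  proof -
    have geq: "g N = (\<lambda>x. (\<Sum>J\<in>{- int N..int N}. f J * indicator {c + of_int J * \<tau> ..< c + (of_int J + 1) * \<tau>} x))"
    proof
      fix x
      have "(\<Sum>J\<in>{- int N..int N}. f J * indicator {c + of_int J * \<tau> ..< c + (of_int J + 1) * \<tau>} x)
          = (\<Sum>J\<in>{- int N..int N}. if J = \<lfloor>(x - c) / \<tau>\<rfloor> then f J else 0)"
        by (rule sum.cong) (simp_all only: indicator_cell[OF tau], auto)
      also have "\<dots> = (if \<lfloor>(x - c) / \<tau>\<rfloor> \<in> {- int N..int N} then f \<lfloor>(x - c) / \<tau>\<rfloor> else 0)"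
        by (simp add: sum.delta')
      finally show "g N x = (\<Sum>J\<in>{- int N..int N}. f J * indicator {c + of_int J * \<tau> ..< c + (of_int J + 1) * \<tau>} x)"
        unfolding g_def by (simp only: indicator_cells[OF tau], auto)
    qed
    show ?thesis unfolding geq by measurable
  qed
  have "(\<integral>\<^sup>+ x. f \<lfloor>(x - c) / \<tau>\<rfloor> \<partial>lborel) = (\<integral>\<^sup>+ x. (SUP N. g N x) \<partial>lborel)" unfolding lim ..
  also have "\<dots> = (SUP N. \<integral>\<^sup>+ x. g N x \<partial>lborel)"
    by (rule nn_integral_monotone_convergence_SUP[OF inc meas])
  also have "\<dots> \<le> S * ennreal \<tau>"
  proof (rule SUP_least)
    fix N
    have "(\<integral>\<^sup>+ x. g N x \<partial>lborel) = (\<Sum>J\<in>{- int N..int N}. f J) * ennreal \<tau>"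
      unfolding g_def by (rule nn_integral_step_cells[OF tau])
    also have "\<dots> \<le> S * ennreal \<tau>" by (intro mult_right_mono S) auto
    finally show "(\<integral>\<^sup>+ x. g N x \<partial>lborel) \<le> S * ennreal \<tau>" .
  qed
  finally show ?thesis .
qed

lemma ennreal_le_add_diff: "(a::ennreal) \<le> b + (a - b)"
  by (cases "a \<le> b") (auto simp: add_increasing2 add_diff_inverse_ennreal)

lemma nn_integral_truncation_small:
  fixes f :: "'a \<Rightarrow> ennreal"
  assumes fm: "f \<in> borel_measurable M" and fin: "(\<integral>\<^sup>+ x. f x \<partial>M) < \<infinity>" and e: "0 < e"
  obtains N :: nat where "(\<integral>\<^sup>+ x. f x - ennreal (real N) \<partial>M) < ennreal e"
proof -
  define g where "g N x = f x - ennreal (real N)" for N x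
  have gm: "g N \<in> borel_measurable M" for N unfolding g_def using fm by measurable
  have gdec: "AE x in M. g (Suc N) x \<le> g N x" for N
    unfolding g_def by (intro AE_I2 ennreal_minus_mono) auto
  have g0: "(\<integral>\<^sup>+ x. g 0 x \<partial>M) < \<infinity>" unfolding g_def using fin by simp
  have "AE x in M. f x \<noteq> \<infinity>" using nn_integral_noteq_infinite[OF fm] fin by auto
  then have ae0: "AE x in M. (INF N. g N x) = 0"
  proof (rule AE_mp, intro AE_I2 impI)
    fix x assume "f x \<noteq> \<infinity>"
    then obtain r where r: "f x = ennreal r" "0 \<le> r" by (cases "f x") auto
    obtain N :: nat where "r \<le> real N" using real_arch_simple by blast
    then have "g N x = 0" unfolding g_def r by (simp add: diff_eq_0_iff_ennreal ennreal_leI)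
    then show "(INF N. g N x) = 0" by (metis INF_lower UNIV_I le_zero_eq)
  qed
  have "(INF N. \<integral>\<^sup>+ x. g N x \<partial>M) = (\<integral>\<^sup>+ x. (INF N. g N x) \<partial>M)"
    by (rule nn_integral_monotone_convergence_INF_AE'[OF gdec gm g0, symmetric])
  also have "\<dots> = 0" using ae0 by (simp add: nn_integral_cong_AE)
  finally have "(INF N. \<integral>\<^sup>+ x. g N x \<partial>M) < ennreal e" using e by simp
  then show ?thesis using that unfolding g_def by (auto simp: INF_less_iff)
qed

lemma nn_integral_short_interval_less:
  fixes f :: "real \<Rightarrow> ennreal"
  assumes fm: "f \<in> borel_measurable lborel" and fin: "(\<integral>\<^sup>+ x. f x \<partial>lborel) < \<infinity>" and e: "0 < e"
  shows "\<exists>\<delta>>0. \<forall>a b. b - a \<le> \<delta> \<longrightarrow> (\<integral>\<^sup>+ x. f x * indicator {a..b} x \<partial>lborel) < ennreal e"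
proof -
  define g where "g N x = f x - ennreal (real N)" for N x
  have gm: "g N \<in> borel_measurable lborel" for N unfolding g_def using fm by measurable
  obtain N where N: "(\<integral>\<^sup>+ x. g N x \<partial>lborel) < ennreal (e / 2)"
    using nn_integral_truncation_small[OF fm fin, of "e / 2"] e unfolding g_def by auto
  define \<delta> where "\<delta> = e / (2 * (real N + 1))"
  have dpos: "\<delta> > 0" unfolding \<delta>_def using e by simp
  have "(\<integral>\<^sup>+ x. f x * indicator {a..b} x \<partial>lborel) < ennreal e" if ab: "b - a \<le> \<delta>" for a b
  proof -
    have "(\<integral>\<^sup>+ x. f x * indicator {a..b} x \<partial>lborel) \<le> (\<integral>\<^sup>+ x. ennreal (real N) * indicator {a..b} x + g N x \<partial>lborel)"
    proof (rule nn_integral_mono)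
      fix x
      have "f x \<le> ennreal (real N) + g N x" unfolding g_def by (rule ennreal_le_add_diff)
      then show "f x * indicator {a..b} x \<le> ennreal (real N) * indicator {a..b} x + g N x"
        by (cases "x \<in> {a..b}") auto
    qed
    also have "\<dots> = ennreal (real N) * emeasure lborel {a..b} + (\<integral>\<^sup>+ x. g N x \<partial>lborel)"
    proof -
      have "g N \<in> borel_measurable borel" using gm by simp
      then show ?thesis by (subst nn_integral_add) (auto simp: nn_integral_cmult_indicator)
    qed
    also have "ennreal (real N) * emeasure lborel {a..b} \<le> ennreal (real N * \<delta>)"
    proof (cases "a \<le> b")
      case True
      then have "ennreal (real N) * emeasure lborel {a..b} = ennreal (real N * (b - a))" by (simp add: ennreal_mult)
      also have "\<dots> \<le> ennreal (real N * \<delta>)" using ab by (intro ennreal_leI mult_left_mono) auto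
      finally show ?thesis .
    next
      case False then show ?thesis by simp
    qed
    finally have c1: "(\<integral>\<^sup>+ x. f x * indicator {a..b} x \<partial>lborel) \<le> ennreal (real N * \<delta>) + (\<integral>\<^sup>+ x. g N x \<partial>lborel)"
      by (simp add: add_right_mono)
    have "real N * \<delta> < e / 2"
    proof -
      have "real N * \<delta> = e / 2 * (real N / (real N + 1))" unfolding \<delta>_def by (simp add: field_simps)
      also have "\<dots> < e / 2 * 1" using e by (intro mult_strict_left_mono) auto
      finally show ?thesis by simp
    qed
    moreover obtain y where y: "(\<integral>\<^sup>+ x. g N x \<partial>lborel) = ennreal y" "0 \<le> y"
      using N by (cases "(\<integral>\<^sup>+ x. g N x \<partial>lborel)") auto
    moreover have "y < e / 2" using N y e by (simp add: ennreal_less_iff)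
    ultimately have "ennreal (real N * \<delta>) + (\<integral>\<^sup>+ x. g N x \<partial>lborel) < ennreal e"
      using dpos by (simp flip: ennreal_plus add: ennreal_less_iff)
    then show ?thesis using c1 by (rule order_le_less_trans[rotated])
  qed
  then show ?thesis using dpos by blast
qed

lemma measurable_step_function:
  fixes g :: "int \<Rightarrow> 'b::topological_space" and \<tau> :: real
  shows "(\<lambda>x. g \<lfloor>x / \<tau>\<rfloor>) \<in> borel_measurable borel"
proof -
  have "(\<lambda>x::real. x / \<tau>) \<in> borel_measurable borel" by measurable
  then have "(\<lambda>x::real. \<lfloor>x / \<tau>\<rfloor>) \<in> measurable borel (count_space UNIV)"
    using measurable_real_floor measurable_comp by (metis comp_def measurable_compose)
  then have "(\<lambda>x. (\<lambda>i x. g i) \<lfloor>x / \<tau>\<rfloor> x) \<in> borel_measurable borel"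
    by (rule measurable_compose_countable'[rotated]) auto
  then show ?thesis by simp
qed

section \<open>The time-splitting solution on the grid\<close>

lemma floor_add_of_int_mult: "0 < \<tau> \<Longrightarrow> \<lfloor>(x + of_int k * \<tau>) / \<tau>\<rfloor> = \<lfloor>x / (\<tau>::real)\<rfloor> + k"
proof -
  assume t: "0 < \<tau>"
  have "(x + of_int k * \<tau>) / \<tau> = x / \<tau> + of_int k" using t by (simp add: field_simps)
  then show ?thesis by simp
qed

lemma ts_grid_floor_eq:
  assumes tau: "0 < \<tau>"
  shows "ts_grid m \<alpha> \<beta> \<tau> d n x = ts_grid m \<alpha> \<beta> \<tau> d n (of_int \<lfloor>x / \<tau>\<rfloor> * \<tau>)"
proof (induction n arbitrary: x)
  case 0
  have "\<lfloor>of_int \<lfloor>x / \<tau>\<rfloor> * \<tau> / \<tau>\<rfloor> = \<lfloor>x / \<tau>\<rfloor>" using tau by simp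
  then show ?case by simp
next
  case (Suc n)
  have e1: "\<lfloor>(x - \<tau>) / \<tau>\<rfloor> = \<lfloor>x / \<tau>\<rfloor> - 1" using floor_add_of_int_mult[OF tau, of x "-1"] by (simp add: algebra_simps)
  have e2: "\<lfloor>(x + \<tau>) / \<tau>\<rfloor> = \<lfloor>x / \<tau>\<rfloor> + 1" using floor_add_of_int_mult[OF tau, of x 1] by simp
  have e3: "\<lfloor>(of_int \<lfloor>x / \<tau>\<rfloor> * \<tau> - \<tau>) / \<tau>\<rfloor> = \<lfloor>x / \<tau>\<rfloor> - 1"
  proof -
    have "(of_int \<lfloor>x / \<tau>\<rfloor> * \<tau> - \<tau>) / \<tau> = of_int (\<lfloor>x / \<tau>\<rfloor> - 1)" using tau by (simp add: field_simps)
    then show ?thesis by (simp only: floor_of_int)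
  qed
  have e4: "\<lfloor>(of_int \<lfloor>x / \<tau>\<rfloor> * \<tau> + \<tau>) / \<tau>\<rfloor> = \<lfloor>x / \<tau>\<rfloor> + 1"
  proof -
    have "(of_int \<lfloor>x / \<tau>\<rfloor> * \<tau> + \<tau>) / \<tau> = of_int (\<lfloor>x / \<tau>\<rfloor> + 1)" using tau by (simp add: field_simps)
    then show ?thesis by (simp only: floor_of_int)
  qed
  show ?case
    by (simp only: ts_grid.simps, subst (1 2 3 4) Suc.IH) (simp only: e1 e2 e3 e4)
qed

definition "ts_node m \<alpha> \<beta> \<tau> d n j = ts_grid m \<alpha> \<beta> \<tau> d n (of_int j * \<tau>)"

lemma ts_grid_eq_ts_node: "0 < \<tau> \<Longrightarrow> ts_grid m \<alpha> \<beta> \<tau> d n x = ts_node m \<alpha> \<beta> \<tau> d n \<lfloor>x / \<tau>\<rfloor>"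
  unfolding ts_node_def by (rule ts_grid_floor_eq)

lemma ts_node_Suc:
  assumes tau: "0 < \<tau>"
  shows "ts_node m \<alpha> \<beta> \<tau> d (Suc n) j = N_flow m \<alpha> \<beta> \<tau> (fst (ts_node m \<alpha> \<beta> \<tau> d n (j - 1)), snd (ts_node m \<alpha> \<beta> \<tau> d n (j + 1)))"
proof -
  have a: "\<lfloor>(of_int j * \<tau> - \<tau>) / \<tau>\<rfloor> = j - 1"
  proof -
    have "(of_int j * \<tau> - \<tau>) / \<tau> = of_int (j - 1)" using tau by (simp add: field_simps)
    then show ?thesis by (simp only: floor_of_int)
  qed
  have b: "\<lfloor>(of_int j * \<tau> + \<tau>) / \<tau>\<rfloor> = j + 1"
  proof -
    have "(of_int j * \<tau> + \<tau>) / \<tau> = of_int (j + 1)" using tau by (simp add: field_simps)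
    then show ?thesis by (simp only: floor_of_int)
  qed
  show ?thesis unfolding ts_node_def[of m \<alpha> \<beta> \<tau> d "Suc n"] ts_grid.simps
    by (simp only: ts_grid_eq_ts_node[OF tau] a b)
qed

lemma ts_node_0: "0 < \<tau> \<Longrightarrow> ts_node m \<alpha> \<beta> \<tau> d 0 j = d j"
  unfolding ts_node_def by simp

lemma ts_u_eq_ts_node:
  assumes tau: "0 < \<tau>"
  shows "ts_u m \<alpha> \<beta> \<tau> d x t = fst (ts_node m \<alpha> \<beta> \<tau> d (nat \<lfloor>t / \<tau>\<rfloor>) (\<lfloor>(x - t) / \<tau>\<rfloor> + int (nat \<lfloor>t / \<tau>\<rfloor>)))"
proof -
  have h: "\<lfloor>(x - (t - real n * \<tau>)) / \<tau>\<rfloor> = \<lfloor>(x - t) / \<tau>\<rfloor> + int n" for n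
  proof -
    have e: "x - (t - real n * \<tau>) = (x - t) + of_int (int n) * \<tau>" by simp
    show ?thesis unfolding e by (rule floor_add_of_int_mult[OF tau])
  qed
  show ?thesis unfolding ts_u_def Let_def ts_grid_eq_ts_node[OF tau] h ..
qed

lemma ts_v_eq_ts_node:
  assumes tau: "0 < \<tau>"
  shows "ts_v m \<alpha> \<beta> \<tau> d x t = snd (ts_node m \<alpha> \<beta> \<tau> d (nat \<lfloor>t / \<tau>\<rfloor>) (\<lfloor>(x + t) / \<tau>\<rfloor> - int (nat \<lfloor>t / \<tau>\<rfloor>)))"
proof -
  have h: "\<lfloor>(x + (t - real n * \<tau>)) / \<tau>\<rfloor> = \<lfloor>(x + t) / \<tau>\<rfloor> - int n" for n
  proof -
    have e: "x + (t - real n * \<tau>) = (x + t) + of_int (- int n) * \<tau>" by simp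
    show ?thesis unfolding e floor_add_of_int_mult[OF tau] by simp
  qed
  show ?thesis unfolding ts_v_def Let_def ts_grid_eq_ts_node[OF tau] h ..
qed

lemma ts_u_0: "0 < \<tau> \<Longrightarrow> ts_u m \<alpha> \<beta> \<tau> d x 0 = fst (d \<lfloor>x / \<tau>\<rfloor>)"
  by (simp add: ts_u_eq_ts_node ts_node_0)

lemma ts_v_0: "0 < \<tau> \<Longrightarrow> ts_v m \<alpha> \<beta> \<tau> d x 0 = snd (d \<lfloor>x / \<tau>\<rfloor>)"
  by (simp add: ts_v_eq_ts_node ts_node_0)

section \<open>Estimates for the time-splitting solution\<close>

lemma power2_norm_le_diff: "(cmod a)^2 \<le> 2 * (cmod (a - b))^2 + 2 * (cmod b)^2"
proof -
  have "cmod a \<le> cmod (a - b) + cmod b" by (metis diff_add_cancel norm_triangle_ineq)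
  then have "(cmod a)^2 \<le> (cmod (a - b) + cmod b)^2" by (intro power_mono) auto
  also have "\<dots> \<le> 2 * (cmod (a - b))^2 + 2 * (cmod b)^2" by (rule power2_add_le)
  finally show ?thesis .
qed

lemma sum_power2_le_nn_integrals:
  fixes w :: "int \<Rightarrow> complex" and u0 :: "real \<Rightarrow> complex"
  assumes tau: "0 < \<tau>" and u0m: "u0 \<in> borel_measurable lborel"
  shows "ennreal (\<Sum>j\<in>{p..q}. \<tau> * (cmod (w j))^2)
     \<le> 2 * (\<integral>\<^sup>+ x. ennreal ((cmod (w \<lfloor>x / \<tau>\<rfloor> - u0 x))^2) \<partial>lborel)
       + 2 * (\<integral>\<^sup>+ x. ennreal ((cmod (u0 x))^2) * indicator {of_int p * \<tau> .. (of_int q + 1) * \<tau>} x \<partial>lborel)"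
proof -
  have wm: "(\<lambda>x. w \<lfloor>x / \<tau>\<rfloor>) \<in> borel_measurable borel" by (rule measurable_step_function)
  have um: "u0 \<in> borel_measurable borel" using u0m by simp
  have "ennreal (\<Sum>j\<in>{p..q}. \<tau> * (cmod (w j))^2) = (\<Sum>j\<in>{p..q}. ennreal ((cmod (w j))^2)) * ennreal \<tau>"
    using tau by (simp add: sum_distrib_right[symmetric] ennreal_mult' mult.commute sum_distrib_left flip: sum_ennreal)
  also have "\<dots> = (\<integral>\<^sup>+ x. ennreal ((cmod (w \<lfloor>(x - 0) / \<tau>\<rfloor>))^2) * indicator {0 + of_int p * \<tau> ..< 0 + (of_int q + 1) * \<tau>} x \<partial>lborel)"
    by (rule nn_integral_step_cells[OF tau, symmetric])
  also have "\<dots> \<le> (\<integral>\<^sup>+ x. 2 * ennreal ((cmod (w \<lfloor>x / \<tau>\<rfloor> - u0 x))^2) + 2 * (ennreal ((cmod (u0 x))^2) * indicator {of_int p * \<tau> .. (of_int q + 1) * \<tau>} x) \<partial>lborel)"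
  proof (rule nn_integral_mono)
    fix x
    show "ennreal ((cmod (w \<lfloor>(x - 0) / \<tau>\<rfloor>))^2) * indicator {0 + of_int p * \<tau> ..< 0 + (of_int q + 1) * \<tau>} x
        \<le> 2 * ennreal ((cmod (w \<lfloor>x / \<tau>\<rfloor> - u0 x))^2) + 2 * (ennreal ((cmod (u0 x))^2) * indicator {of_int p * \<tau> .. (of_int q + 1) * \<tau>} x)"
    proof (cases "x \<in> {of_int p * \<tau> ..< (of_int q + 1) * \<tau>}")
      case True
      then have "x \<in> {of_int p * \<tau> .. (of_int q + 1) * \<tau>}" by auto
      moreover have "ennreal ((cmod (w \<lfloor>x / \<tau>\<rfloor>))^2) \<le> ennreal (2 * (cmod (w \<lfloor>x / \<tau>\<rfloor> - u0 x))^2 + 2 * (cmod (u0 x))^2)"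
        by (intro ennreal_leI power2_norm_le_diff)
      ultimately show ?thesis using True by (simp add: ennreal_plus ennreal_mult')
    next
      case False then show ?thesis by simp
    qed
  qed
  also have "\<dots> = 2 * (\<integral>\<^sup>+ x. ennreal ((cmod (w \<lfloor>x / \<tau>\<rfloor> - u0 x))^2) \<partial>lborel)
       + 2 * (\<integral>\<^sup>+ x. ennreal ((cmod (u0 x))^2) * indicator {of_int p * \<tau> .. (of_int q + 1) * \<tau>} x \<partial>lborel)"
    using wm um by (subst nn_integral_add) (auto simp: nn_integral_cmult)
  finally show ?thesis .
qed

lemma shift_bound_mono:
  assumes K: "0 \<le> K" and M: "0 \<le> M" and "0 \<le> \<eta>" "\<eta> \<le> \<eta>'" "0 \<le> x" "x \<le> x'"
  shows "shift_bound K M T \<eta> x \<le> shift_bound K M T \<eta>' x'"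
proof -
  define G where "G = exp (K * (M + T))"
  define E where "E = exp (2 * G^2 * K^2 * T * T)"
  have G0: "0 \<le> G" and E0: "0 \<le> E" unfolding G_def E_def by auto
  have "4 * G^2 * \<eta> * E \<le> 4 * G^2 * \<eta>' * E" using assms G0 E0 by (intro mult_right_mono mult_left_mono) auto
  moreover have "0 \<le> 4 * G^2 * \<eta> * E" using assms G0 E0 by simp
  ultimately have s: "4 * G^2 * \<eta> * E + x \<le> 4 * G^2 * \<eta>' * E + x'" "0 \<le> 4 * G^2 * \<eta> * E + x"
    using assms by linarith+
  have "(K * G * (4 * G^2 * \<eta> * E + x))^2 \<le> (K * G * (4 * G^2 * \<eta>' * E + x'))^2"
    using s K G0 by (intro power_mono mult_left_mono) auto
  then have a1: "2 * (K * G * (4 * G^2 * \<eta> * E + x))^2 * M \<le> 2 * (K * G * (4 * G^2 * \<eta>' * E + x'))^2 * M"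
    using M by (intro mult_right_mono mult_left_mono) auto
  have "(K * K * G * (4 * G^2 * \<eta> * E + x) + K)^2 \<le> (K * K * G * (4 * G^2 * \<eta>' * E + x') + K)^2"
    using s K G0 by (intro power_mono add_right_mono mult_left_mono) auto
  moreover have "x^2 * M \<le> x'^2 * M" using assms by (intro mult_right_mono power_mono) auto
  ultimately have a2: "(K * K * G * (4 * G^2 * \<eta> * E + x) + K)^2 * (x^2 * M) \<le> (K * K * G * (4 * G^2 * \<eta>' * E + x') + K)^2 * (x'^2 * M)"
    by (rule mult_mono) (use M in auto)
  show ?thesis unfolding shift_bound_def Let_def G_def[symmetric] E_def[symmetric]
    using a1 a2 by linarith
qed

lemma shift_bound_small:
  assumes "0 < \<epsilon>"
  obtains \<delta> where "0 < \<delta>" "shift_bound K M T \<delta> \<delta> < \<epsilon>"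
proof -
  have "((\<lambda>\<delta>. shift_bound K M T \<delta> \<delta>) \<longlongrightarrow> shift_bound K M T 0 0) (at_right 0)"
    unfolding shift_bound_def Let_def by (intro tendsto_intros)
  moreover have "shift_bound K M T 0 0 = 0" unfolding shift_bound_def Let_def by simp
  ultimately have "\<forall>\<^sub>F \<delta> in at_right 0. shift_bound K M T \<delta> \<delta> < \<epsilon>"
    using assms by (auto dest: order_tendstoD(2))
  then obtain b where "0 < b" "\<And>\<delta>. 0 < \<delta> \<Longrightarrow> \<delta> < b \<Longrightarrow> shift_bound K M T \<delta> \<delta> < \<epsilon>"
    unfolding eventually_at_right_field by auto
  then show ?thesis using that[of "b / 2"] by simp
qed

lemma nat_floor_divide_diff:
  assumes \<tau>: "0 < \<tau>" and t0: "0 \<le> t0" and h: "0 \<le> h"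
  shows "nat \<lfloor>t0 / \<tau>\<rfloor> \<le> nat \<lfloor>(t0 + h) / \<tau>\<rfloor>"
    and "real (nat \<lfloor>(t0 + h) / \<tau>\<rfloor> - nat \<lfloor>t0 / \<tau>\<rfloor>) * \<tau> \<le> h + \<tau>"
    and "real (nat \<lfloor>(t0 + h) / \<tau>\<rfloor>) * \<tau> \<le> t0 + h"
proof -
  have bounds: "real (nat \<lfloor>s / \<tau>\<rfloor>) * \<tau> \<le> s" "s < (real (nat \<lfloor>s / \<tau>\<rfloor>) + 1) * \<tau>" if "0 \<le> s" for s
  proof -
    have e: "real (nat \<lfloor>s / \<tau>\<rfloor>) = of_int \<lfloor>s / \<tau>\<rfloor>" using \<tau> that by simp
    have "of_int \<lfloor>s / \<tau>\<rfloor> * \<tau> \<le> s / \<tau> * \<tau>" using \<tau> by (intro mult_right_mono) linarith+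
    then show "real (nat \<lfloor>s / \<tau>\<rfloor>) * \<tau> \<le> s" unfolding e using \<tau> by simp
    have "s / \<tau> * \<tau> < (of_int \<lfloor>s / \<tau>\<rfloor> + 1) * \<tau>" using \<tau> by (intro mult_strict_right_mono) linarith+
    then show "s < (real (nat \<lfloor>s / \<tau>\<rfloor>) + 1) * \<tau>" unfolding e using \<tau> by simp
  qed
  show le: "nat \<lfloor>t0 / \<tau>\<rfloor> \<le> nat \<lfloor>(t0 + h) / \<tau>\<rfloor>"
    using \<tau> h by (intro nat_mono floor_mono divide_right_mono) auto
  show "real (nat \<lfloor>(t0 + h) / \<tau>\<rfloor>) * \<tau> \<le> t0 + h" using bounds t0 h by simp
  have "real (nat \<lfloor>(t0 + h) / \<tau>\<rfloor> - nat \<lfloor>t0 / \<tau>\<rfloor>) * \<tau> = real (nat \<lfloor>(t0 + h) / \<tau>\<rfloor>) * \<tau> - real (nat \<lfloor>t0 / \<tau>\<rfloor>) * \<tau>"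
    using le by (simp add: of_nat_diff algebra_simps)
  then show "real (nat \<lfloor>(t0 + h) / \<tau>\<rfloor> - nat \<lfloor>t0 / \<tau>\<rfloor>) * \<tau> \<le> h + \<tau>"
    using bounds[of t0] bounds[of "t0 + h"] t0 h by (simp add: algebra_simps)
qed

lemma nn_integral_step_le_real:
  fixes g :: "int \<Rightarrow> real"
  assumes \<tau>: "0 < \<tau>" and g: "\<And>J. 0 \<le> g J" and S: "\<And>p q. \<tau> * (\<Sum>J\<in>{p..q}. g J) \<le> B"
  shows "(\<integral>\<^sup>+ x. ennreal (g \<lfloor>(x - c) / \<tau>\<rfloor>) \<partial>lborel) \<le> ennreal B"
proof -
  have B: "0 \<le> B" using S[of 1 0] by simp
  have "(\<integral>\<^sup>+ x. ennreal (g \<lfloor>(x - c) / \<tau>\<rfloor>) \<partial>lborel) \<le> ennreal (B / \<tau>) * ennreal \<tau>"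
  proof (rule nn_integral_step_le[OF \<tau>])
    fix p q
    have "(\<Sum>J\<in>{p..q}. g J) \<le> B / \<tau>" using S[of p q] \<tau> by (simp add: pos_le_divide_eq mult.commute)
    then show "(\<Sum>J\<in>{p..q}. ennreal (g J)) \<le> ennreal (B / \<tau>)"
      using g by (simp add: sum_ennreal ennreal_leI sum_nonneg)
  qed
  also have "\<dots> = ennreal B" using B \<tau> by (simp flip: ennreal_mult)
  finally show ?thesis .
qed

lemma sum_power2_le_of_nn_integrals:
  fixes w :: "int \<Rightarrow> complex" and f :: "real \<Rightarrow> complex"
  assumes \<tau>: "0 < \<tau>" and f: "f \<in> borel_measurable lborel"
    and e: "(\<integral>\<^sup>+ x. ennreal ((cmod (w \<lfloor>x / \<tau>\<rfloor> - f x))^2) \<partial>lborel) \<le> ennreal e"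
    and a: "(\<integral>\<^sup>+ x. ennreal ((cmod (f x))^2) * indicator {of_int p * \<tau> .. (of_int q + 1) * \<tau>} x \<partial>lborel) \<le> ennreal a"
    and e0: "0 \<le> e" and a0: "0 \<le> a"
  shows "(\<Sum>j\<in>{p..q}. \<tau> * (cmod (w j))^2) \<le> 2 * e + 2 * a"
proof -
  have "ennreal (\<Sum>j\<in>{p..q}. \<tau> * (cmod (w j))^2)
      \<le> 2 * (\<integral>\<^sup>+ x. ennreal ((cmod (w \<lfloor>x / \<tau>\<rfloor> - f x))^2) \<partial>lborel)
        + 2 * (\<integral>\<^sup>+ x. ennreal ((cmod (f x))^2) * indicator {of_int p * \<tau> .. (of_int q + 1) * \<tau>} x \<partial>lborel)"
    by (rule sum_power2_le_nn_integrals[OF \<tau> f])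
  also have "\<dots> \<le> 2 * ennreal e + 2 * ennreal a"
    using e a by (intro add_mono mult_left_mono) auto
  also have "\<dots> = ennreal (2 * e + 2 * a)"
    using e0 a0 by (simp add: ennreal_plus ennreal_mult')
  finally show ?thesis by (subst (asm) ennreal_le_iff) (use e0 a0 in auto)
qed

lemma lattice_mass_bounded:
  fixes w :: "real \<Rightarrow> int \<Rightarrow> complex" and f :: "real \<Rightarrow> complex"
  assumes f: "f \<in> borel_measurable lborel" "integrable lborel (\<lambda>x. (cmod (f x))^2)"
    and conv: "((\<lambda>\<tau>. \<integral>\<^sup>+ x. ennreal ((cmod (w \<tau> \<lfloor>x / \<tau>\<rfloor> - f x))^2) \<partial>lborel) \<longlongrightarrow> 0) (at_right 0)"
  obtains \<tau>1 where "0 < \<tau>1"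
    "\<And>\<tau> p q. 0 < \<tau> \<Longrightarrow> \<tau> < \<tau>1 \<Longrightarrow> (\<Sum>j\<in>{p..q}. \<tau> * (cmod (w \<tau> j))^2) \<le> 2 + 2 * (LINT x|lborel. (cmod (f x))^2)"
proof -
  define N where "N = (LINT x|lborel. (cmod (f x))^2)"
  have N: "(\<integral>\<^sup>+ x. ennreal ((cmod (f x))^2) \<partial>lborel) = ennreal N"
    unfolding N_def by (rule nn_integral_eq_integral[OF f(2)]) simp
  have N0: "0 \<le> N" unfolding N_def by simp
  have "\<forall>\<^sub>F \<tau> in at_right 0. (\<integral>\<^sup>+ x. ennreal ((cmod (w \<tau> \<lfloor>x / \<tau>\<rfloor> - f x))^2) \<partial>lborel) < ennreal 1"
    using order_tendstoD(2)[OF conv, of "ennreal 1"] by simp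
  then obtain \<tau>1 where \<tau>1: "0 < \<tau>1"
    "\<And>\<tau>. 0 < \<tau> \<Longrightarrow> \<tau> < \<tau>1 \<Longrightarrow> (\<integral>\<^sup>+ x. ennreal ((cmod (w \<tau> \<lfloor>x / \<tau>\<rfloor> - f x))^2) \<partial>lborel) < ennreal 1"
    unfolding eventually_at_right_field by auto
  show ?thesis
  proof (rule that[OF \<tau>1(1)])
    fix \<tau> p q assume \<tau>: "0 < \<tau>" "\<tau> < \<tau>1"
    have "(\<integral>\<^sup>+ x. ennreal ((cmod (f x))^2) * indicator {of_int p * \<tau> .. (of_int q + 1) * \<tau>} x \<partial>lborel) \<le> ennreal N"
      unfolding N[symmetric] by (intro nn_integral_mono) (simp add: indicator_def)
    then show "(\<Sum>j\<in>{p..q}. \<tau> * (cmod (w \<tau> j))^2) \<le> 2 + 2 * (LINT x|lborel. (cmod (f x))^2)"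
      using sum_power2_le_of_nn_integrals[OF \<tau>(1) f(1) less_imp_le[OF \<tau>1(2)[OF \<tau>]]] N0
      unfolding N_def by simp
  qed
qed

lemma lattice_window_mass_small:
  fixes w :: "real \<Rightarrow> int \<Rightarrow> complex" and f :: "real \<Rightarrow> complex"
  assumes f: "f \<in> borel_measurable lborel" "integrable lborel (\<lambda>x. (cmod (f x))^2)"
    and conv: "((\<lambda>\<tau>. \<integral>\<^sup>+ x. ennreal ((cmod (w \<tau> \<lfloor>x / \<tau>\<rfloor> - f x))^2) \<partial>lborel) \<longlongrightarrow> 0) (at_right 0)"
    and \<eta>: "0 < \<eta>"
  obtains \<delta> where "0 < \<delta>"
    "\<And>\<tau> p q. 0 < \<tau> \<Longrightarrow> \<tau> < \<delta> \<Longrightarrow> of_int (q - p + 1) * \<tau> \<le> \<delta> \<Longrightarrow> (\<Sum>j\<in>{p..q}. \<tau> * (cmod (w \<tau> j))^2) \<le> \<eta>"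
proof -
  have fm: "(\<lambda>x. ennreal ((cmod (f x))^2)) \<in> borel_measurable lborel" using f(1) by measurable
  have "(\<integral>\<^sup>+ x. ennreal ((cmod (f x))^2) \<partial>lborel) < \<infinity>"
    using nn_integral_eq_integral[OF f(2)] by simp
  then obtain \<delta>a where \<delta>a: "0 < \<delta>a"
    "\<And>a b. b - a \<le> \<delta>a \<Longrightarrow> (\<integral>\<^sup>+ x. ennreal ((cmod (f x))^2) * indicator {a..b} x \<partial>lborel) < ennreal (\<eta> / 4)"
    using nn_integral_short_interval_less[OF fm, of "\<eta> / 4"] \<eta> by auto
  have "\<forall>\<^sub>F \<tau> in at_right 0. (\<integral>\<^sup>+ x. ennreal ((cmod (w \<tau> \<lfloor>x / \<tau>\<rfloor> - f x))^2) \<partial>lborel) < ennreal (\<eta> / 4)"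
    using order_tendstoD(2)[OF conv, of "ennreal (\<eta> / 4)"] \<eta> by simp
  then obtain \<tau>2 where \<tau>2: "0 < \<tau>2"
    "\<And>\<tau>. 0 < \<tau> \<Longrightarrow> \<tau> < \<tau>2 \<Longrightarrow> (\<integral>\<^sup>+ x. ennreal ((cmod (w \<tau> \<lfloor>x / \<tau>\<rfloor> - f x))^2) \<partial>lborel) < ennreal (\<eta> / 4)"
    unfolding eventually_at_right_field by auto
  show ?thesis
  proof (rule that[of "min \<delta>a \<tau>2"])
    show "0 < min \<delta>a \<tau>2" using \<delta>a \<tau>2 by simp
    fix \<tau> p q assume \<tau>: "0 < \<tau>" "\<tau> < min \<delta>a \<tau>2" and len: "of_int (q - p + 1) * \<tau> \<le> min \<delta>a \<tau>2"
    have "(of_int q + 1) * \<tau> - of_int p * \<tau> \<le> \<delta>a" using len by (simp add: algebra_simps)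
    then have "(\<Sum>j\<in>{p..q}. \<tau> * (cmod (w \<tau> j))^2) \<le> 2 * (\<eta> / 4) + 2 * (\<eta> / 4)"
      using \<tau> \<eta> sum_power2_le_of_nn_integrals[OF \<tau>(1) f(1) less_imp_le[OF \<tau>2(2)] less_imp_le[OF \<delta>a(2)]]
      by simp
    then show "(\<Sum>j\<in>{p..q}. \<tau> * (cmod (w \<tau> j))^2) \<le> \<eta>" by simp
  qed
qed

lemma ts_node_splitting_lattice:
  assumes m: "m \<ge> 0" and \<tau>: "0 < \<tau>" "\<tau> \<le> 1"
    and M: "\<And>p q. (\<Sum>j\<in>{p..q}. \<tau> * (cmod (fst (d j)))^2 + \<tau> * (cmod (snd (d j)))^2) \<le> M"
  shows "splitting_lattice (N_flow m \<alpha> \<beta> \<tau>) \<tau> (step_const m \<alpha> \<beta> M) M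
           (\<lambda>n j. fst (ts_node m \<alpha> \<beta> \<tau> d n j)) (\<lambda>n j. snd (ts_node m \<alpha> \<beta> \<tau> d n j))"
proof unfold_locales
  have M0: "0 \<le> M" using M[of 1 0] by simp
  show "0 < \<tau>" by (rule \<tau>(1))
  show "0 \<le> step_const m \<alpha> \<beta> M" by (rule step_const_nonneg[OF m M0])
  show "norm (N_flow m \<alpha> \<beta> \<tau> p) = norm p" for p using norm_N_flow[OF m] \<tau> by simp
  show "N_flow m \<alpha> \<beta> \<tau> (snd p, fst p) = (snd (N_flow m \<alpha> \<beta> \<tau> p), fst (N_flow m \<alpha> \<beta> \<tau> p))" for p
    using N_flow_swap[OF m] \<tau> by simp
  show "cmod (fst (N_flow m \<alpha> \<beta> \<tau> (a, b)) - a) \<le> step_const m \<alpha> \<beta> M * (\<tau> * cmod a * (cmod b)^2 + \<tau> * cmod a + \<tau> * cmod b)"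
    if "\<tau> * ((cmod a)^2 + (cmod b)^2) \<le> M" for a b
    by (rule N_flow_fst_increment_le[OF m \<tau> that])
  show "fst (ts_node m \<alpha> \<beta> \<tau> d (Suc n) j)
      = fst (N_flow m \<alpha> \<beta> \<tau> (fst (ts_node m \<alpha> \<beta> \<tau> d n (j - 1)), snd (ts_node m \<alpha> \<beta> \<tau> d n (j + 1))))"
    and "snd (ts_node m \<alpha> \<beta> \<tau> d (Suc n) j)
      = snd (N_flow m \<alpha> \<beta> \<tau> (fst (ts_node m \<alpha> \<beta> \<tau> d n (j - 1)), snd (ts_node m \<alpha> \<beta> \<tau> d n (j + 1))))" for n j
    using ts_node_Suc[OF \<tau>(1)] by simp_all
  show "(\<Sum>j\<in>{p..q}. \<tau> * (cmod (fst (ts_node m \<alpha> \<beta> \<tau> d 0 j)))^2 + \<tau> * (cmod (snd (ts_node m \<alpha> \<beta> \<tau> d 0 j)))^2) \<le> M" for p q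
    using M[of p q] by (simp add: ts_node_0[OF \<tau>(1)])
qed

lemma ts_node_shift_sums_le:
  fixes d :: "int \<Rightarrow> complex \<times> complex"
  assumes m: "m \<ge> 0" and \<tau>: "0 < \<tau>" "\<tau> \<le> 1"
    and M: "\<And>p q. (\<Sum>j\<in>{p..q}. \<tau> * (cmod (fst (d j)))^2 + \<tau> * (cmod (snd (d j)))^2) \<le> M"
    and \<eta>: "\<And>p q. of_int (q - p + 1) * \<tau> \<le> 2 * (h + \<tau>) \<Longrightarrow>
              (\<Sum>j\<in>{p..q}. \<tau> * (cmod (fst (d j)))^2) \<le> \<eta> \<and> (\<Sum>j\<in>{p..q}. \<tau> * (cmod (snd (d j)))^2) \<le> \<eta>"
    and \<eta>0: "0 \<le> \<eta>" and n: "real (n0 + k) * \<tau> \<le> T" and k: "real k * \<tau> \<le> h + \<tau>"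
  shows "(\<Sum>J\<in>{p..q}. \<tau> * (cmod (fst (ts_node m \<alpha> \<beta> \<tau> d (n0 + k) (J + int k)) - fst (ts_node m \<alpha> \<beta> \<tau> d n0 J)))^2)
           \<le> shift_bound (step_const m \<alpha> \<beta> M) M T \<eta> (h + \<tau>)"
    and "(\<Sum>J\<in>{p..q}. \<tau> * (cmod (snd (ts_node m \<alpha> \<beta> \<tau> d (n0 + k) (J - int k)) - snd (ts_node m \<alpha> \<beta> \<tau> d n0 J)))^2)
           \<le> shift_bound (step_const m \<alpha> \<beta> M) M T \<eta> (h + \<tau>)"
proof -
  interpret L: splitting_lattice "N_flow m \<alpha> \<beta> \<tau>" \<tau> "step_const m \<alpha> \<beta> M" M
      "\<lambda>n j. fst (ts_node m \<alpha> \<beta> \<tau> d n j)" "\<lambda>n j. snd (ts_node m \<alpha> \<beta> \<tau> d n j)"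
    by (rule ts_node_splitting_lattice[OF m \<tau> M])
  have "0 \<le> real n0 * \<tau>" "0 \<le> real k * \<tau>" using \<tau>(1) by simp_all
  then have n0T: "real n0 * \<tau> \<le> T" and kT: "real k * \<tau> \<le> T" and T0: "0 \<le> T"
    using n by (simp_all add: distrib_right)
  have windows: "window_sum (L.massA 0) p (2 * int k) \<le> \<eta>" "window_sum (L.massB 0) p (2 * int k) \<le> \<eta>" for p
  proof -
    have "of_int (p + 2 * int k - 1 - p + 1) * \<tau> \<le> 2 * (h + \<tau>)" using k by simp
    from \<eta>[OF this] show "window_sum (L.massA 0) p (2 * int k) \<le> \<eta>" "window_sum (L.massB 0) p (2 * int k) \<le> \<eta>"
      unfolding window_sum_def L.massA_def L.massB_def ts_node_0[OF \<tau>(1)] by simp_all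
  qed
  have "shift_bound (step_const m \<alpha> \<beta> M) M T \<eta> (real k * \<tau>) \<le> shift_bound (step_const m \<alpha> \<beta> M) M T \<eta> (h + \<tau>)"
    by (rule shift_bound_mono[OF step_const_nonneg[OF m L.M_nonneg]]) (use L.M_nonneg \<eta>0 k \<tau> in auto)
  then show "(\<Sum>J\<in>{p..q}. \<tau> * (cmod (fst (ts_node m \<alpha> \<beta> \<tau> d (n0 + k) (J + int k)) - fst (ts_node m \<alpha> \<beta> \<tau> d n0 J)))^2)
           \<le> shift_bound (step_const m \<alpha> \<beta> M) M T \<eta> (h + \<tau>)"
    and "(\<Sum>J\<in>{p..q}. \<tau> * (cmod (snd (ts_node m \<alpha> \<beta> \<tau> d (n0 + k) (J - int k)) - snd (ts_node m \<alpha> \<beta> \<tau> d n0 J)))^2)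
           \<le> shift_bound (step_const m \<alpha> \<beta> M) M T \<eta> (h + \<tau>)"
    using L.shift_diffA_sum_le[OF T0 \<eta>0 windows n0T kT, of p q]
      L.shift_diffB_sum_le[OF T0 \<eta>0 windows n0T kT, of p q] by linarith+
qed

lemma ts_shift_nn_integral_le:
  fixes d :: "int \<Rightarrow> complex \<times> complex"
  assumes m: "m \<ge> 0" and \<tau>: "0 < \<tau>" "\<tau> \<le> 1"
    and M: "\<And>p q. (\<Sum>j\<in>{p..q}. \<tau> * (cmod (fst (d j)))^2 + \<tau> * (cmod (snd (d j)))^2) \<le> M"
    and \<eta>: "\<And>p q. of_int (q - p + 1) * \<tau> \<le> 2 * (h + \<tau>) \<Longrightarrow>
              (\<Sum>j\<in>{p..q}. \<tau> * (cmod (fst (d j)))^2) \<le> \<eta> \<and> (\<Sum>j\<in>{p..q}. \<tau> * (cmod (snd (d j)))^2) \<le> \<eta>"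
    and \<eta>0: "0 \<le> \<eta>" and t0: "0 \<le> t0" and h: "0 \<le> h" and T: "t0 + h \<le> T"
  shows "(\<integral>\<^sup>+ x. ennreal ((cmod (ts_u m \<alpha> \<beta> \<tau> d (x + h) (t0 + h) - ts_u m \<alpha> \<beta> \<tau> d x t0))^2) \<partial>lborel)
           \<le> ennreal (shift_bound (step_const m \<alpha> \<beta> M) M T \<eta> (h + \<tau>))"
    and "(\<integral>\<^sup>+ x. ennreal ((cmod (ts_v m \<alpha> \<beta> \<tau> d (x - h) (t0 + h) - ts_v m \<alpha> \<beta> \<tau> d x t0))^2) \<partial>lborel)
           \<le> ennreal (shift_bound (step_const m \<alpha> \<beta> M) M T \<eta> (h + \<tau>))"
proof -
  define A where "A n j = fst (ts_node m \<alpha> \<beta> \<tau> d n j)" for n j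
  define B where "B n j = snd (ts_node m \<alpha> \<beta> \<tau> d n j)" for n j
  define bound where "bound = shift_bound (step_const m \<alpha> \<beta> M) M T \<eta> (h + \<tau>)"
  define n0 where "n0 = nat \<lfloor>t0 / \<tau>\<rfloor>"
  define k where "k = nat \<lfloor>(t0 + h) / \<tau>\<rfloor> - n0"
  have n1: "nat \<lfloor>(t0 + h) / \<tau>\<rfloor> = n0 + k" and k\<tau>: "real k * \<tau> \<le> h + \<tau>"
    and n1T: "real (n0 + k) * \<tau> \<le> T"
    using nat_floor_divide_diff[OF \<tau>(1) t0 h] T unfolding n0_def k_def by simp_all
  note sums = ts_node_shift_sums_le[where \<alpha>=\<alpha> and \<beta>=\<beta>, OF m \<tau> M \<eta> \<eta>0 n1T k\<tau>, folded A_def B_def bound_def]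
  show "(\<integral>\<^sup>+ x. ennreal ((cmod (ts_u m \<alpha> \<beta> \<tau> d (x + h) (t0 + h) - ts_u m \<alpha> \<beta> \<tau> d x t0))^2) \<partial>lborel) \<le> ennreal bound"
  proof -
    define g where "g J = (cmod (A (n0 + k) (J + int (n0 + k)) - A n0 (J + int n0)))^2" for J
    have eq: "(cmod (ts_u m \<alpha> \<beta> \<tau> d (x + h) (t0 + h) - ts_u m \<alpha> \<beta> \<tau> d x t0))^2 = g \<lfloor>(x - t0) / \<tau>\<rfloor>" for x
      unfolding g_def A_def ts_u_eq_ts_node[OF \<tau>(1)] n0_def[symmetric] n1 by simp
    have "\<tau> * (\<Sum>J\<in>{p..q}. g J) \<le> bound" for p q
    proof -
      have "\<tau> * (\<Sum>J\<in>{p..q}. g J) = (\<Sum>J\<in>{p..q}. (\<lambda>J. \<tau> * (cmod (A (n0 + k) (J + int k) - A n0 J))^2) (J + int n0))"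
        unfolding g_def by (simp add: sum_distrib_left algebra_simps)
      also have "\<dots> = (\<Sum>J\<in>{p + int n0..q + int n0}. \<tau> * (cmod (A (n0 + k) (J + int k) - A n0 J))^2)"
        by (rule sum_int_shift_reindex)
      also have "\<dots> \<le> bound" by (rule sums(1))
      finally show ?thesis .
    qed
    then show ?thesis unfolding eq by (rule nn_integral_step_le_real[OF \<tau>(1), rotated]) (simp add: g_def)
  qed
  show "(\<integral>\<^sup>+ x. ennreal ((cmod (ts_v m \<alpha> \<beta> \<tau> d (x - h) (t0 + h) - ts_v m \<alpha> \<beta> \<tau> d x t0))^2) \<partial>lborel) \<le> ennreal bound"
  proof -
    define g where "g J = (cmod (B (n0 + k) (J - int (n0 + k)) - B n0 (J - int n0)))^2" for J
    have eq: "(cmod (ts_v m \<alpha> \<beta> \<tau> d (x - h) (t0 + h) - ts_v m \<alpha> \<beta> \<tau> d x t0))^2 = g \<lfloor>(x - (- t0)) / \<tau>\<rfloor>" for x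
      unfolding g_def B_def ts_v_eq_ts_node[OF \<tau>(1)] n0_def[symmetric] n1 by simp
    have "\<tau> * (\<Sum>J\<in>{p..q}. g J) \<le> bound" for p q
    proof -
      have "\<tau> * (\<Sum>J\<in>{p..q}. g J) = (\<Sum>J\<in>{p..q}. (\<lambda>J. \<tau> * (cmod (B (n0 + k) (J - int k) - B n0 J))^2) (J + - int n0))"
        unfolding g_def by (simp add: sum_distrib_left algebra_simps)
      also have "\<dots> = (\<Sum>J\<in>{p + (- int n0)..q + (- int n0)}. \<tau> * (cmod (B (n0 + k) (J - int k) - B n0 J))^2)"
        by (rule sum_int_shift_reindex)
      also have "\<dots> \<le> bound" by (rule sums(2))
      finally show ?thesis .
    qed
    then show ?thesis unfolding eq by (rule nn_integral_step_le_real[OF \<tau>(1), rotated]) (simp add: g_def)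
  qed
qed

lemma ts_initial_mass_bounded:
  fixes d :: "real \<Rightarrow> int \<Rightarrow> complex \<times> complex" and u0 v0 :: "real \<Rightarrow> complex"
  assumes u0: "u0 \<in> borel_measurable lborel" "integrable lborel (\<lambda>x. (cmod (u0 x))^2)"
    and v0: "v0 \<in> borel_measurable lborel" "integrable lborel (\<lambda>x. (cmod (v0 x))^2)"
    and conv_u: "((\<lambda>\<tau>. \<integral>\<^sup>+ x. ennreal ((cmod (fst (d \<tau> \<lfloor>x / \<tau>\<rfloor>) - u0 x))^2) \<partial>lborel) \<longlongrightarrow> 0) (at_right 0)"
    and conv_v: "((\<lambda>\<tau>. \<integral>\<^sup>+ x. ennreal ((cmod (snd (d \<tau> \<lfloor>x / \<tau>\<rfloor>) - v0 x))^2) \<partial>lborel) \<longlongrightarrow> 0) (at_right 0)"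
  obtains \<tau>s M where "0 < \<tau>s" "\<tau>s < 1" "0 \<le> M"
    "\<And>\<tau> p q. 0 < \<tau> \<Longrightarrow> \<tau> < \<tau>s \<Longrightarrow>
       (\<Sum>j\<in>{p..q}. \<tau> * (cmod (fst (d \<tau> j)))^2 + \<tau> * (cmod (snd (d \<tau> j)))^2) \<le> M"
proof -
  obtain \<tau>u where \<tau>u: "0 < \<tau>u" "\<And>\<tau> p q. 0 < \<tau> \<Longrightarrow> \<tau> < \<tau>u \<Longrightarrow>
      (\<Sum>j\<in>{p..q}. \<tau> * (cmod (fst (d \<tau> j)))^2) \<le> 2 + 2 * (LINT x|lborel. (cmod (u0 x))^2)"
    using lattice_mass_bounded[OF u0 conv_u] by blast
  obtain \<tau>v where \<tau>v: "0 < \<tau>v" "\<And>\<tau> p q. 0 < \<tau> \<Longrightarrow> \<tau> < \<tau>v \<Longrightarrow>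
      (\<Sum>j\<in>{p..q}. \<tau> * (cmod (snd (d \<tau> j)))^2) \<le> 2 + 2 * (LINT x|lborel. (cmod (v0 x))^2)"
    using lattice_mass_bounded[OF v0 conv_v] by blast
  show ?thesis
  proof (rule that[of "min (min \<tau>u \<tau>v) 1 / 2"
        "(2 + 2 * (LINT x|lborel. (cmod (u0 x))^2)) + (2 + 2 * (LINT x|lborel. (cmod (v0 x))^2))"])
    show "0 < min (min \<tau>u \<tau>v) 1 / 2" "min (min \<tau>u \<tau>v) 1 / 2 < 1" using \<tau>u(1) \<tau>v(1) by auto
    show "0 \<le> (2 + 2 * (LINT x|lborel. (cmod (u0 x))^2)) + (2 + 2 * (LINT x|lborel. (cmod (v0 x))^2))" by simp
    fix \<tau> p q assume "0 < \<tau>" "\<tau> < min (min \<tau>u \<tau>v) 1 / 2"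
    then show "(\<Sum>j\<in>{p..q}. \<tau> * (cmod (fst (d \<tau> j)))^2 + \<tau> * (cmod (snd (d \<tau> j)))^2)
        \<le> (2 + 2 * (LINT x|lborel. (cmod (u0 x))^2)) + (2 + 2 * (LINT x|lborel. (cmod (v0 x))^2))"
      using \<tau>u(2)[of \<tau> p q] \<tau>v(2)[of \<tau> p q] by (simp add: sum.distrib)
  qed
qed

lemma ts_initial_windows_small:
  fixes d :: "real \<Rightarrow> int \<Rightarrow> complex \<times> complex" and u0 v0 :: "real \<Rightarrow> complex"
  assumes u0: "u0 \<in> borel_measurable lborel" "integrable lborel (\<lambda>x. (cmod (u0 x))^2)"
    and v0: "v0 \<in> borel_measurable lborel" "integrable lborel (\<lambda>x. (cmod (v0 x))^2)"
    and conv_u: "((\<lambda>\<tau>. \<integral>\<^sup>+ x. ennreal ((cmod (fst (d \<tau> \<lfloor>x / \<tau>\<rfloor>) - u0 x))^2) \<partial>lborel) \<longlongrightarrow> 0) (at_right 0)"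
    and conv_v: "((\<lambda>\<tau>. \<integral>\<^sup>+ x. ennreal ((cmod (snd (d \<tau> \<lfloor>x / \<tau>\<rfloor>) - v0 x))^2) \<partial>lborel) \<longlongrightarrow> 0) (at_right 0)"
    and \<eta>: "0 < \<eta>"
  obtains \<delta> where "0 < \<delta>"
    "\<And>\<tau> p q. 0 < \<tau> \<Longrightarrow> \<tau> < \<delta> \<Longrightarrow> of_int (q - p + 1) * \<tau> \<le> \<delta> \<Longrightarrow>
       (\<Sum>j\<in>{p..q}. \<tau> * (cmod (fst (d \<tau> j)))^2) \<le> \<eta> \<and> (\<Sum>j\<in>{p..q}. \<tau> * (cmod (snd (d \<tau> j)))^2) \<le> \<eta>"
proof -
  obtain \<delta>u where \<delta>u: "0 < \<delta>u" "\<And>\<tau> p q. 0 < \<tau> \<Longrightarrow> \<tau> < \<delta>u \<Longrightarrow> of_int (q - p + 1) * \<tau> \<le> \<delta>u \<Longrightarrow>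
      (\<Sum>j\<in>{p..q}. \<tau> * (cmod (fst (d \<tau> j)))^2) \<le> \<eta>"
    using lattice_window_mass_small[OF u0 conv_u \<eta>] by blast
  obtain \<delta>v where \<delta>v: "0 < \<delta>v" "\<And>\<tau> p q. 0 < \<tau> \<Longrightarrow> \<tau> < \<delta>v \<Longrightarrow> of_int (q - p + 1) * \<tau> \<le> \<delta>v \<Longrightarrow>
      (\<Sum>j\<in>{p..q}. \<tau> * (cmod (snd (d \<tau> j)))^2) \<le> \<eta>"
    using lattice_window_mass_small[OF v0 conv_v \<eta>] by blast
  show ?thesis
    by (rule that[of "min \<delta>u \<delta>v"]) (use \<delta>u \<delta>v in auto)
qed

lemma ts_shift_nn_integrals_small:
  fixes d :: "real \<Rightarrow> int \<Rightarrow> complex \<times> complex" and u0 v0 :: "real \<Rightarrow> complex"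
  assumes m: "m \<ge> 0"
    and u0: "u0 \<in> borel_measurable lborel" "integrable lborel (\<lambda>x. (cmod (u0 x))^2)"
    and v0: "v0 \<in> borel_measurable lborel" "integrable lborel (\<lambda>x. (cmod (v0 x))^2)"
    and conv_fst: "((\<lambda>\<tau>. \<integral>\<^sup>+ x. ennreal ((cmod (fst (d \<tau> \<lfloor>x / \<tau>\<rfloor>) - u0 x))^2) \<partial>lborel) \<longlongrightarrow> 0) (at_right 0)"
    and conv_snd: "((\<lambda>\<tau>. \<integral>\<^sup>+ x. ennreal ((cmod (snd (d \<tau> \<lfloor>x / \<tau>\<rfloor>) - v0 x))^2) \<partial>lborel) \<longlongrightarrow> 0) (at_right 0)"
    and \<tau>s: "\<tau>s \<le> 1" and M0: "0 \<le> M"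
    and M: "\<And>\<tau> p q. 0 < \<tau> \<Longrightarrow> \<tau> < \<tau>s \<Longrightarrow>
       (\<Sum>j\<in>{p..q}. \<tau> * (cmod (fst (d \<tau> j)))^2 + \<tau> * (cmod (snd (d \<tau> j)))^2) \<le> M"
    and \<epsilon>: "0 < \<epsilon>"
  shows "\<exists>\<delta>1>0. \<forall>\<tau> h t0. 0 < \<tau> \<and> \<tau> < min \<delta>1 \<tau>s \<and> 0 < h \<and> h < \<delta>1 \<and> 0 \<le> t0 \<and> t0 + h \<le> T \<longrightarrow>
      (\<integral>\<^sup>+ x. ennreal ((cmod (ts_u m \<alpha> \<beta> \<tau> (d \<tau>) (x + h) (t0 + h) - ts_u m \<alpha> \<beta> \<tau> (d \<tau>) x t0))^2) \<partial>lborel) < ennreal (\<epsilon> + \<tau>) \<and>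
      (\<integral>\<^sup>+ x. ennreal ((cmod (ts_v m \<alpha> \<beta> \<tau> (d \<tau>) (x - h) (t0 + h) - ts_v m \<alpha> \<beta> \<tau> (d \<tau>) x t0))^2) \<partial>lborel) < ennreal (\<epsilon> + \<tau>)"
proof -
  define K where "K = step_const m \<alpha> \<beta> M"
  have K0: "0 \<le> K" unfolding K_def by (rule step_const_nonneg[OF m M0])
  obtain \<delta>2 where \<delta>2: "0 < \<delta>2" "shift_bound K M T \<delta>2 \<delta>2 < \<epsilon>" using shift_bound_small[OF \<epsilon>] by blast
  obtain \<delta>w where \<delta>w: "0 < \<delta>w" "\<And>\<tau> p q. 0 < \<tau> \<Longrightarrow> \<tau> < \<delta>w \<Longrightarrow> of_int (q - p + 1) * \<tau> \<le> \<delta>w \<Longrightarrow>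
      (\<Sum>j\<in>{p..q}. \<tau> * (cmod (fst (d \<tau> j)))^2) \<le> \<delta>2 \<and> (\<Sum>j\<in>{p..q}. \<tau> * (cmod (snd (d \<tau> j)))^2) \<le> \<delta>2"
    using ts_initial_windows_small[OF u0 v0 conv_fst conv_snd \<delta>2(1)] by blast
  show ?thesis
  proof (intro exI[of _ "min (\<delta>2 / 2) (\<delta>w / 4)"] conjI allI impI)
    show "0 < min (\<delta>2 / 2) (\<delta>w / 4)" using \<delta>2(1) \<delta>w(1) by simp
    fix \<tau> h t0 assume "0 < \<tau> \<and> \<tau> < min (min (\<delta>2 / 2) (\<delta>w / 4)) \<tau>s \<and> 0 < h \<and> h < min (\<delta>2 / 2) (\<delta>w / 4) \<and> 0 \<le> t0 \<and> t0 + h \<le> T"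
    then have \<tau>: "0 < \<tau>" "\<tau> \<le> 1" "\<tau> < \<tau>s" "\<tau> < \<delta>w" and h: "0 \<le> h" "h + \<tau> \<le> \<delta>2" "2 * (h + \<tau>) \<le> \<delta>w"
      and t0: "0 \<le> t0" "t0 + h \<le> T"
      using \<tau>s by auto
    have windows: "(\<Sum>j\<in>{p..q}. \<tau> * (cmod (fst (d \<tau> j)))^2) \<le> \<delta>2 \<and> (\<Sum>j\<in>{p..q}. \<tau> * (cmod (snd (d \<tau> j)))^2) \<le> \<delta>2"
      if "of_int (q - p + 1) * \<tau> \<le> 2 * (h + \<tau>)" for p q
      using \<delta>w(2)[OF \<tau>(1) \<tau>(4)] that h(3) by simp
    have "shift_bound K M T \<delta>2 (h + \<tau>) \<le> shift_bound K M T \<delta>2 \<delta>2"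
      by (rule shift_bound_mono[OF K0 M0]) (use \<delta>2(1) \<tau>(1) h in auto)
    then have "ennreal (shift_bound K M T \<delta>2 (h + \<tau>)) < ennreal (\<epsilon> + \<tau>)"
      using \<delta>2(2) \<tau>(1) \<epsilon> by (intro ennreal_lessI) auto
    then show "(\<integral>\<^sup>+ x. ennreal ((cmod (ts_u m \<alpha> \<beta> \<tau> (d \<tau>) (x + h) (t0 + h) - ts_u m \<alpha> \<beta> \<tau> (d \<tau>) x t0))^2) \<partial>lborel) < ennreal (\<epsilon> + \<tau>)"
      and "(\<integral>\<^sup>+ x. ennreal ((cmod (ts_v m \<alpha> \<beta> \<tau> (d \<tau>) (x - h) (t0 + h) - ts_v m \<alpha> \<beta> \<tau> (d \<tau>) x t0))^2) \<partial>lborel) < ennreal (\<epsilon> + \<tau>)"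
      using ts_shift_nn_integral_le[where \<alpha>=\<alpha> and \<beta>=\<beta>,
          OF m \<tau>(1,2) M[OF \<tau>(1,3)] windows less_imp_le[OF \<delta>2(1)] t0(1) h(1) t0(2)]
      unfolding K_def by (auto intro: order_le_less_trans)
  qed
qed

theorem lemma3p4:
  fixes m \<alpha> \<beta> T :: real
    and u0 v0 :: "real \<Rightarrow> complex"
    and d :: "real \<Rightarrow> int \<Rightarrow> complex \<times> complex"
  assumes m: "m \<ge> 0"
    and u0: "u0 \<in> borel_measurable lborel" "integrable lborel (\<lambda>x. (cmod (u0 x))^2)"
    and v0: "v0 \<in> borel_measurable lborel" "integrable lborel (\<lambda>x. (cmod (v0 x))^2)"
    and d_l2: "\<And>\<tau>. \<tau> > 0 \<Longrightarrow>
        (\<lambda>j. (cmod (fst (d \<tau> j)))^2 + (cmod (snd (d \<tau> j)))^2) summable_on UNIV"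
    and conv_u: "((\<lambda>\<tau>. \<integral>\<^sup>+ x. ennreal ((cmod (ts_u m \<alpha> \<beta> \<tau> (d \<tau>) x 0 - u0 x))^2) \<partial>lborel)
                    \<longlongrightarrow> 0) (at_right 0)"
    and conv_v: "((\<lambda>\<tau>. \<integral>\<^sup>+ x. ennreal ((cmod (ts_v m \<alpha> \<beta> \<tau> (d \<tau>) x 0 - v0 x))^2) \<partial>lborel)
                    \<longlongrightarrow> 0) (at_right 0)"
    and T: "T > 0"
  shows "\<exists>\<tau>s. 0 < \<tau>s \<and> \<tau>s < 1 \<and> (\<exists>C1 > 0. \<forall>\<epsilon> > 0. \<exists>\<delta>1 > 0.
           \<forall>\<tau> h t0. 0 < \<tau> \<and> \<tau> < min \<delta>1 \<tau>s \<and> 0 < h \<and> h < \<delta>1 \<and> 0 \<le> t0 \<and> t0 + h \<le> T \<longrightarrow>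
             (\<integral>\<^sup>+ x. ennreal ((cmod (ts_u m \<alpha> \<beta> \<tau> (d \<tau>) (x + h) (t0 + h)
                                    - ts_u m \<alpha> \<beta> \<tau> (d \<tau>) x t0))^2) \<partial>lborel)
               < ennreal (C1 * (\<epsilon> + \<tau>)) \<and>
             (\<integral>\<^sup>+ x. ennreal ((cmod (ts_v m \<alpha> \<beta> \<tau> (d \<tau>) (x - h) (t0 + h)
                                    - ts_v m \<alpha> \<beta> \<tau> (d \<tau>) x t0))^2) \<partial>lborel)
               < ennreal (C1 * (\<epsilon> + \<tau>)))"
proof -
  have pos: "\<forall>\<^sub>F \<tau> in at_right 0. (\<tau>::real) > 0" by (rule eventually_at_right_less)
  have conv_fst: "((\<lambda>\<tau>. \<integral>\<^sup>+ x. ennreal ((cmod (fst (d \<tau> \<lfloor>x / \<tau>\<rfloor>) - u0 x))^2) \<partial>lborel) \<longlongrightarrow> 0) (at_right 0)"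
    using conv_u by (rule tendsto_cong[THEN iffD1, rotated]) (rule eventually_mono[OF pos], simp add: ts_u_0)
  have conv_snd: "((\<lambda>\<tau>. \<integral>\<^sup>+ x. ennreal ((cmod (snd (d \<tau> \<lfloor>x / \<tau>\<rfloor>) - v0 x))^2) \<partial>lborel) \<longlongrightarrow> 0) (at_right 0)"
    using conv_v by (rule tendsto_cong[THEN iffD1, rotated]) (rule eventually_mono[OF pos], simp add: ts_v_0)
  obtain \<tau>s M where \<tau>s: "0 < \<tau>s" "\<tau>s < 1" and M0: "0 \<le> M"
    and M: "\<And>\<tau> p q. 0 < \<tau> \<Longrightarrow> \<tau> < \<tau>s \<Longrightarrow>
       (\<Sum>j\<in>{p..q}. \<tau> * (cmod (fst (d \<tau> j)))^2 + \<tau> * (cmod (snd (d \<tau> j)))^2) \<le> M"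
    using ts_initial_mass_bounded[OF u0 v0 conv_fst conv_snd] by blast
  have "\<forall>\<epsilon>>0. \<exists>\<delta>1>0. \<forall>\<tau> h t0. 0 < \<tau> \<and> \<tau> < min \<delta>1 \<tau>s \<and> 0 < h \<and> h < \<delta>1 \<and> 0 \<le> t0 \<and> t0 + h \<le> T \<longrightarrow>
      (\<integral>\<^sup>+ x. ennreal ((cmod (ts_u m \<alpha> \<beta> \<tau> (d \<tau>) (x + h) (t0 + h) - ts_u m \<alpha> \<beta> \<tau> (d \<tau>) x t0))^2) \<partial>lborel) < ennreal (1 * (\<epsilon> + \<tau>)) \<and>
      (\<integral>\<^sup>+ x. ennreal ((cmod (ts_v m \<alpha> \<beta> \<tau> (d \<tau>) (x - h) (t0 + h) - ts_v m \<alpha> \<beta> \<tau> (d \<tau>) x t0))^2) \<partial>lborel) < ennreal (1 * (\<epsilon> + \<tau>))"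
    using ts_shift_nn_integrals_small[OF m u0 v0 conv_fst conv_snd _ M0 M] \<tau>s by simp
  then show ?thesis using \<tau>s by (intro exI[of _ \<tau>s] conjI exI[of _ 1]) auto
qed

end
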